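(* Let $L$ be a finite relational language and let $K$ be the class of finite $L$-structures (here the empty structure is allowed as a member of $K$). Let $\mathcal{A}\in K$. (1) If $\mathcal{A}$ is empty, then $I(\mathcal{A})$ is $m$-complete $\Pi^0_1$ within $K$. (2) If $\mathcal{A}$ has size $n\ge 1$, then $I(\mathcal{A})$ is $m$-complete $d$-c.e. within $K$.
   Context: Structures have universes contained in $\omega$ and are identified with their atomic diagrams $D(\mathcal{A})$; $\mathcal{A}$ is computable if $D(\mathcal{A})$ is computable. Let $(\varphi_a)_{a\in\omega}$ be a standard computable enumeration of the unary partial computable functions. An index for a computable structure $\mathcal{A}$ is a number $a$ with $\varphi_a=\chi_{D(\mathcal{A})}$. The index set $I(\mathcal{A})$ is the set of all indices of computable structures isomorphic to $\mathcal{A}$; for a class $K$ closed under isomorphism, $I(K)$ is the set of indices of computable members of $K$. For a complexity class $\Gamma$ (e.g. $\Pi^0_1$, or $d$-c.e. = the class of sets $S_1-S_2$ with $S_1,S_2$ c.e.), $I(\mathcal{A})$ is $\Gamma$ within $K$ if $I(\mathcal{A})=R\cap I(K)$ for some $R\in\Gamma$, and it is $m$-complete $\Gamma$ within $K$ if it is $\Gamma$ within $K$ and for every $S\in\Gamma$ there is a computable $f:\omega\to I(K)$ with $n\in S$ iff $f(n)\in I(\mathcal{A})$ (equivalently, a uniformly computable sequence $(\mathcal{C}_n)$ of members of $K$ with $n\in S$ iff $\mathcal{C}_n\cong\mathcal{A}$). *)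

theory Defs
  imports Main "HOL-Library.Nat_Bijection"
begin

text \<open>Unary partial recursive functions on nat, using the Cantor pairing
  prod_encode / prod_decode for tupling.\<close>

datatype rf = Zero | Succ | Left | Right | Comp rf rf | Pair rf rf | Rec rf rf | Mu rf

inductive ev :: "rf \<Rightarrow> nat \<Rightarrow> nat \<Rightarrow> bool" where
  ev_Zero: "ev Zero x 0"
| ev_Succ: "ev Succ x (Suc x)"
| ev_Left: "ev Left x (fst (prod_decode x))"
| ev_Right: "ev Right x (snd (prod_decode x))"
| ev_Comp: "ev g x y \<Longrightarrow> ev f y z \<Longrightarrow> ev (Comp f g) x z"
| ev_Pair: "ev f x y \<Longrightarrow> ev g x z \<Longrightarrow> ev (Pair f g) x (prod_encode (y, z))"
| ev_Rec0: "ev f x y \<Longrightarrow> ev (Rec f g) (prod_encode (0, x)) y"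
| ev_RecS: "ev (Rec f g) (prod_encode (n, x)) y \<Longrightarrow>
             ev g (prod_encode (n, prod_encode (y, x))) z \<Longrightarrow>
             ev (Rec f g) (prod_encode (Suc n, x)) z"
| ev_Mu: "ev f (prod_encode (y, x)) 0 \<Longrightarrow>
          (\<forall>z<y. \<exists>v. v \<noteq> 0 \<and> ev f (prod_encode (z, x)) v) \<Longrightarrow>
          ev (Mu f) x y"

lemma fst_prod_decode_le: "fst (prod_decode m) \<le> m"
  by (metis le_prod_encode_1 prod.collapse prod_decode_inverse)

lemma snd_prod_decode_le: "snd (prod_decode m) \<le> m"
  by (metis le_prod_encode_2 prod.collapse prod_decode_inverse)

function decode :: "nat \<Rightarrow> rf" where
  "decode n =
    (if n mod 8 = 0 then Zero
     else if n mod 8 = 1 then Succ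
     else if n mod 8 = 2 then Left
     else if n mod 8 = 3 then Right
     else if n mod 8 = 4 then Comp (decode (fst (prod_decode (n div 8)))) (decode (snd (prod_decode (n div 8))))
     else if n mod 8 = 5 then Pair (decode (fst (prod_decode (n div 8)))) (decode (snd (prod_decode (n div 8))))
     else if n mod 8 = 6 then Rec (decode (fst (prod_decode (n div 8)))) (decode (snd (prod_decode (n div 8))))
     else Mu (decode (n div 8)))"
  by auto
lemma div8_lt: "(n::nat) mod 8 \<noteq> 0 \<Longrightarrow> n div 8 < n"
  by (cases "n = 0") auto

lemma div8_fst: "(n::nat) mod 8 \<noteq> 0 \<Longrightarrow> fst (prod_decode (n div 8)) < n"
  using div8_lt fst_prod_decode_le le_less_trans by blast

lemma div8_snd: "(n::nat) mod 8 \<noteq> 0 \<Longrightarrow> snd (prod_decode (n div 8)) < n"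
  using div8_lt snd_prod_decode_le le_less_trans by blast

termination decode
  by (relation "measure id") (auto simp: div8_lt div8_fst div8_snd)

definition phi :: "nat \<Rightarrow> nat \<Rightarrow> nat option" where
  "phi a x = (if \<exists>y. ev (decode a) x y then Some (THE y. ev (decode a) x y) else None)"

definition total_computable :: "(nat \<Rightarrow> nat) \<Rightarrow> bool" where
  "total_computable f \<longleftrightarrow> (\<exists>e. \<forall>x. phi e x = Some (f x))"

definition ce :: "nat set \<Rightarrow> bool" where
  "ce S \<longleftrightarrow> (\<exists>e. S = {x. phi e x \<noteq> None})"

definition Pi01 :: "nat set set" where
  "Pi01 = {S. ce (- S)}"

definition dce :: "nat set set" where
  "dce = {S1 - S2 | S1 S2. ce S1 \<and> ce S2}"

text \<open>A finite relational language is a list of arities: symbol i has arity ar ! i.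
  An L-structure is a universe (a subset of nat) together with an interpretation
  of the relation symbols (only tuples from the universe matter).\<close>

type_synonym struc = "nat set \<times> (nat \<Rightarrow> nat list \<Rightarrow> bool)"

datatype atom = AEq nat nat | ARel nat "nat list"

fun atom_wf :: "nat list \<Rightarrow> nat set \<Rightarrow> atom \<Rightarrow> bool" where
  "atom_wf ar U (AEq a b) \<longleftrightarrow> a \<in> U \<and> b \<in> U"
| "atom_wf ar U (ARel i xs) \<longleftrightarrow> i < length ar \<and> length xs = ar ! i \<and> set xs \<subseteq> U"

fun holds :: "struc \<Rightarrow> atom \<Rightarrow> bool" where
  "holds A (AEq a b) \<longleftrightarrow> a = b"
| "holds A (ARel i xs) \<longleftrightarrow> snd A i xs"

fun atom_code :: "atom \<Rightarrow> nat" where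
  "atom_code (AEq a b) = prod_encode (0, prod_encode (a, b))"
| "atom_code (ARel i xs) = prod_encode (Suc i, list_encode xs)"

text \<open>Code of a literal: (True, at) codes the atomic sentence at, (False, at) its negation.\<close>
definition lit_code :: "bool \<Rightarrow> atom \<Rightarrow> nat" where
  "lit_code p at = prod_encode (if p then 1 else 0, atom_code at)"

text \<open>Atomic diagram: codes of atomic sentences and negated atomic sentences
  (with constants for the elements of the universe) true in A.\<close>
definition diagram :: "nat list \<Rightarrow> struc \<Rightarrow> nat set" where
  "diagram ar A = {lit_code p at | p at. atom_wf ar (fst A) at \<and> (holds A at \<longleftrightarrow> p)}"

definition iso :: "nat list \<Rightarrow> struc \<Rightarrow> struc \<Rightarrow> bool" where
  "iso ar A B \<longleftrightarrow> (\<exists>h. bij_betw h (fst A) (fst B) \<and>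
     (\<forall>i < length ar. \<forall>xs. length xs = ar ! i \<and> set xs \<subseteq> fst A \<longrightarrow>
        (snd A i xs \<longleftrightarrow> snd B i (map h xs))))"

definition is_index :: "nat list \<Rightarrow> nat \<Rightarrow> struc \<Rightarrow> bool" where
  "is_index ar a A \<longleftrightarrow> (\<forall>x. phi a x = Some (if x \<in> diagram ar A then 1 else 0))"

definition index_set :: "nat list \<Rightarrow> struc \<Rightarrow> nat set" where
  "index_set ar A = {a. \<exists>B. iso ar B A \<and> is_index ar a B}"

definition index_set_fin :: "nat list \<Rightarrow> nat set" where
  "index_set_fin ar = {a. \<exists>B. finite (fst B) \<and> is_index ar a B}"

definition within :: "nat set set \<Rightarrow> nat set \<Rightarrow> nat set \<Rightarrow> bool" where
  "within \<Gamma> IA IK \<longleftrightarrow> (\<exists>R \<in> \<Gamma>. IA = R \<inter> IK)"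

definition m_complete_within :: "nat set set \<Rightarrow> nat set \<Rightarrow> nat set \<Rightarrow> bool" where
  "m_complete_within \<Gamma> IA IK \<longleftrightarrow> within \<Gamma> IA IK \<and>
     (\<forall>S \<in> \<Gamma>. \<exists>f. total_computable f \<and> (\<forall>n. f n \<in> IK) \<and> (\<forall>n. n \<in> S \<longleftrightarrow> f n \<in> IA))"

end

theory Submission
  imports Defs
begin

text \<open>Halting of \<open>phi e\<close> on n is witnessed by a finite computation trace whose correctness is
  decidable, so the set of indices a for which \<open>phi a\<close> outputs 1 on computably given literals
  is c.e.

  For empty A, an index of a finite structure indexes a copy of A unless it declares an element,
  or a nullary fact refuted by A: a co-c.e. condition. Conversely, if the complement of S is the
  domain of \<open>phi e\<close>, let the n-th structure consist of the least halting trace of \<open>phi e\<close>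
  on n, if there is one; it is empty iff n \<in> S.

  For |A| = k \<ge> 1, B is a copy of A iff B contains a copy of A (c.e. in the index) and has no
  k + 1 distinct elements (co-c.e.). For S = S1 - S2, let the n-th structure be A with its least
  element withheld until n enters S1, plus one fresh element once n has entered S2 as well; it is
  a copy of A iff n \<in> S. In both reductions the structures are pulled back from A, so their
  diagrams are decidable uniformly in n, and s-m-n turns them into a computable sequence of
  indices.\<close>

section \<open>Evaluation and program codes\<close>

lemma ev_det: "ev p x y \<Longrightarrow> ev p x y' \<Longrightarrow> y = y'"
proof (induction arbitrary: y' rule: ev.induct)
  case (ev_Comp g x y f z)
  from ev_Comp.prems show ?case by (cases rule: ev.cases) (use ev_Comp.IH in auto)
next
  case (ev_Pair f x y g z)
  from ev_Pair.prems show ?case by (cases rule: ev.cases) (use ev_Pair.IH in auto)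
next
  case (ev_Rec0 f x y g)
  from ev_Rec0.prems show ?case by (cases rule: ev.cases) (use ev_Rec0.IH in auto)
next
  case (ev_RecS f g n x y z)
  from ev_RecS.prems show ?case by (cases rule: ev.cases) (use ev_RecS.IH in auto)
next
  case (ev_Mu f y x)
  from ev_Mu.prems show ?case
  proof (cases rule: ev.cases)
    case ev_Mu
    show ?thesis
    proof (rule ccontr)
      assume ne: "y \<noteq> y'"
      show False
      proof (cases "y < y'")
        case True
        with ev_Mu obtain v where "v \<noteq> 0" "ev f (prod_encode (y, x)) v" by auto
        with ev_Mu.IH(1) show False by auto
      next
        case False
        with ne have "y' < y" by auto
        with ev_Mu.IH(2) obtain v where "v \<noteq> 0" "\<forall>u. ev f (prod_encode (y', x)) u \<longrightarrow> v = u" by auto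
        with ev_Mu show False by auto
      qed
    qed
  qed
next
  case ev_Zero then show ?case by (cases rule: ev.cases) simp_all
next
  case ev_Succ then show ?case by (cases rule: ev.cases) simp_all
next
  case ev_Left then show ?case by (cases rule: ev.cases) simp_all
next
  case ev_Right then show ?case by (cases rule: ev.cases) simp_all
qed

primrec code_of :: "rf \<Rightarrow> nat" where
  "code_of Zero = 0"
| "code_of Succ = 1"
| "code_of Left = 2"
| "code_of Right = 3"
| "code_of (Comp f g) = 4 + 8 * prod_encode (code_of f, code_of g)"
| "code_of (Pair f g) = 5 + 8 * prod_encode (code_of f, code_of g)"
| "code_of (Rec f g) = 6 + 8 * prod_encode (code_of f, code_of g)"
| "code_of (Mu f) = 7 + 8 * code_of f"

lemma decode_code_of [simp]: "decode (code_of p) = p"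
  by (induction p) (subst decode.simps; simp)+

declare decode.simps [simp del]

lemma phi_ev: assumes "ev (decode e) x y" shows "phi e x = Some y"
proof -
  have "(THE y. ev (decode e) x y) = y"
    by (rule the_equality) (use assms ev_det in blast)+
  then show ?thesis unfolding phi_def using assms by auto
qed

lemma phi_Some: "phi e x = Some y \<longleftrightarrow> ev (decode e) x y"
proof
  assume h: "phi e x = Some y"
  then have ex: "\<exists>y. ev (decode e) x y" unfolding phi_def by (auto split: if_splits)
  then obtain y' where "ev (decode e) x y'" by blast
  with phi_ev h show "ev (decode e) x y" by simp
qed (rule phi_ev)

lemma phi_None: "phi e x \<noteq> None \<longleftrightarrow> (\<exists>y. ev (decode e) x y)"
  unfolding phi_def by simp

section \<open>Computable functions and decidable predicates\<close>

definition computable :: "(nat \<Rightarrow> nat) \<Rightarrow> bool" where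
  "computable f \<longleftrightarrow> (\<exists>p. \<forall>x. ev p x (f x))"

lemma computable_total_computable: "computable f \<Longrightarrow> total_computable f"
  unfolding computable_def total_computable_def
  by (metis decode_code_of phi_ev)

lemma computable_id: "computable (\<lambda>x. x)"
  unfolding computable_def
  by (rule exI[of _ "Pair Left Right"])
      (metis ev_Left ev_Pair ev_Right prod.collapse prod_decode_inverse)

primrec const_prog :: "nat \<Rightarrow> rf" where
  "const_prog 0 = Zero"
| "const_prog (Suc n) = Comp Succ (const_prog n)"

lemma ev_const_prog: "ev (const_prog n) x n"
  by (induction n) (auto intro: ev.intros)

lemma computable_const: "computable (\<lambda>x. c)"
  unfolding computable_def using ev_const_prog by blast

lemma computable_comp: "computable f \<Longrightarrow> computable g \<Longrightarrow> computable (\<lambda>x. f (g x))"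
  unfolding computable_def by (meson ev_Comp)

lemma computable_pair: "computable f \<Longrightarrow> computable g \<Longrightarrow> computable (\<lambda>x. prod_encode (f x, g x))"
  unfolding computable_def by (meson ev_Pair)

lemma computable_fst: "computable f \<Longrightarrow> computable (\<lambda>x. fst (prod_decode (f x)))"
  unfolding computable_def by (meson ev_Comp ev_Left)

lemma computable_snd: "computable f \<Longrightarrow> computable (\<lambda>x. snd (prod_decode (f x)))"
  unfolding computable_def by (meson ev_Comp ev_Right)

lemma computable_Suc: "computable f \<Longrightarrow> computable (\<lambda>x. Suc (f x))"
  unfolding computable_def by (meson ev_Comp ev_Succ)

primrec natrec :: "(nat \<Rightarrow> nat) \<Rightarrow> (nat \<Rightarrow> nat) \<Rightarrow> nat \<Rightarrow> nat \<Rightarrow> nat" where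
  "natrec f g 0 y = f y"
| "natrec f g (Suc n) y = g (prod_encode (n, prod_encode (natrec f g n y, y)))"

lemma computable_natrec_prod_decode:
  assumes "computable f" "computable g"
  shows "computable (\<lambda>x. natrec f g (fst (prod_decode x)) (snd (prod_decode x)))"
proof -
  from assms obtain pf pg where pf: "\<And>x. ev pf x (f x)" and pg: "\<And>x. ev pg x (g x)"
    unfolding computable_def by blast
  have h: "ev (Rec pf pg) (prod_encode (n, y)) (natrec f g n y)" for n y
  proof (induction n)
    case 0 then show ?case using ev_Rec0[OF pf] by simp
  next
    case (Suc n) then show ?case using ev_RecS[OF Suc pg] by simp
  qed
  have "\<forall>x. ev (Rec pf pg) x (natrec f g (fst (prod_decode x)) (snd (prod_decode x)))"
    using h by (metis prod.collapse prod_decode_inverse)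
  then show ?thesis unfolding computable_def by (rule exI)
qed

lemma computable_natrec:
  assumes "computable f" "computable g" "computable n" "computable e"
  shows "computable (\<lambda>x. natrec f g (n x) (e x))"
  using computable_comp[OF computable_natrec_prod_decode[OF assms(1,2)]
      computable_pair[OF assms(3,4)]]
  by (simp only: prod_encode_inverse fst_conv snd_conv)

definition decidable :: "(nat \<Rightarrow> bool) \<Rightarrow> bool" where
  "decidable P \<longleftrightarrow> computable (\<lambda>x. if P x then 1 else 0)"

lemma computable_ext: "computable f \<Longrightarrow> (\<And>x. f x = g x) \<Longrightarrow> computable g"
  by (metis ext)

lemma decidable_ext: assumes "decidable P" "\<And>x. P x = Q x" shows "decidable Q"
  using assms(1) ext[of P Q, OF assms(2)] by simp

lemma computable_if:
  assumes "decidable P" "computable f" "computable g"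
  shows "computable (\<lambda>x. if P x then f x else g x)"
proof -
  have c: "computable (\<lambda>x. if P x then 1 else 0)" using assms(1) unfolding decidable_def .
  have "computable (\<lambda>x. natrec (\<lambda>y. snd (prod_decode y))
      (\<lambda>z. fst (prod_decode (snd (prod_decode (snd (prod_decode z))))))
           (if P x then 1 else 0) (prod_encode (f x, g x)))"
    by (intro computable_natrec computable_snd computable_fst computable_id c computable_pair
        assms(2,3))
  then show ?thesis by (rule computable_ext) simp
qed

lemma computable_add: "computable f \<Longrightarrow> computable g \<Longrightarrow> computable (\<lambda>x. f x + g x)"
proof -
  assume a: "computable f" "computable g"
  have "computable (\<lambda>x. natrec (\<lambda>y. y) (\<lambda>z. Suc (fst (prod_decode (snd (prod_decode z))))) (g x)
      (f x))"
    by (intro computable_natrec computable_Suc computable_snd computable_fst computable_id a)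
  moreover have "natrec (\<lambda>y. y) (\<lambda>z. Suc (fst (prod_decode (snd (prod_decode z))))) n m = m + n"
    for n m
    by (induction n) auto
  ultimately show ?thesis by (rule computable_ext)
qed

lemma computable_pred: "computable f \<Longrightarrow> computable (\<lambda>x. f x - 1)"
proof -
  assume a: "computable f"
  have "computable (\<lambda>x. natrec (\<lambda>y. 0) (\<lambda>z. fst (prod_decode z)) (f x) 0)"
    by (intro computable_natrec computable_fst computable_id a computable_const)
  moreover have "natrec (\<lambda>y. 0) (\<lambda>z. fst (prod_decode z)) n m = n - 1" for n m
    by (induction n) auto
  ultimately show ?thesis by (rule computable_ext)
qed

lemma computable_sub: "computable f \<Longrightarrow> computable g \<Longrightarrow> computable (\<lambda>x. f x - g x)"
proof -
  assume a: "computable f" "computable g"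
  have "computable (\<lambda>x. natrec (\<lambda>y. y) (\<lambda>z. fst (prod_decode (snd (prod_decode z))) - 1) (g x)
      (f x))"
    by (intro computable_natrec computable_pred computable_snd computable_fst computable_id a)
  moreover have "natrec (\<lambda>y. y) (\<lambda>z. fst (prod_decode (snd (prod_decode z))) - 1) n m = m - n"
    for n m
    by (induction n) auto
  ultimately show ?thesis by (rule computable_ext)
qed

lemma computable_mult: "computable f \<Longrightarrow> computable g \<Longrightarrow> computable (\<lambda>x. f x * g x)"
proof -
  assume a: "computable f" "computable g"
  have "computable (\<lambda>x. natrec (\<lambda>y. 0)
      (\<lambda>z. fst (prod_decode (snd (prod_decode z))) + snd (prod_decode (snd (prod_decode z)))) (g x)
      (f x))"
    by (intro computable_natrec computable_add computable_snd computable_fst computable_id a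
        computable_const)
  moreover have "natrec (\<lambda>y. 0)
      (\<lambda>z. fst (prod_decode (snd (prod_decode z))) + snd (prod_decode (snd (prod_decode z)))) n m =
      m * n" for n m
    by (induction n) auto
  ultimately show ?thesis by (rule computable_ext)
qed

lemma decidable_eq: "computable f \<Longrightarrow> computable g \<Longrightarrow> decidable (\<lambda>x. f x = g x)"
  unfolding decidable_def
  by (rule computable_ext[where f="\<lambda>x. 1 - ((f x - g x) + (g x - f x))"])
    (intro computable_sub computable_add computable_const, auto)

lemma decidable_less: "computable f \<Longrightarrow> computable g \<Longrightarrow> decidable (\<lambda>x. f x < g x)"
  unfolding decidable_def
  by (rule computable_ext[where f="\<lambda>x. 1 - (1 - (g x - f x))"])
    (intro computable_sub computable_const, auto)

lemma decidable_not: "decidable P \<Longrightarrow> decidable (\<lambda>x. \<not> P x)"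
  unfolding decidable_def
  by (rule computable_ext[where f="\<lambda>x. 1 - (if P x then 1 else 0)"])
    (intro computable_sub computable_const, auto)

lemma decidable_le: "computable f \<Longrightarrow> computable g \<Longrightarrow> decidable (\<lambda>x. f x \<le> g x)"
  by (rule decidable_ext[OF decidable_not[OF decidable_less[of g f]]]) auto

lemma decidable_conj: "decidable P \<Longrightarrow> decidable Q \<Longrightarrow> decidable (\<lambda>x. P x \<and> Q x)"
  unfolding decidable_def
  by (rule computable_ext[where f="\<lambda>x. (if P x then 1 else 0) * (if Q x then 1 else 0)"])
    (intro computable_mult, auto)

lemma decidable_disj: "decidable P \<Longrightarrow> decidable Q \<Longrightarrow> decidable (\<lambda>x. P x \<or> Q x)"
  by (rule decidable_ext[OF decidable_not[OF decidable_conj[OF decidable_not decidable_not]]]) auto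

lemma decidable_imp: "decidable P \<Longrightarrow> decidable Q \<Longrightarrow> decidable (\<lambda>x. P x \<longrightarrow> Q x)"
  by (rule decidable_ext[OF decidable_disj[OF decidable_not]]) auto

lemma decidable_iff: "decidable P \<Longrightarrow> decidable Q \<Longrightarrow> decidable (\<lambda>x. P x \<longleftrightarrow> Q x)"
  by (rule decidable_ext[OF decidable_conj[OF decidable_imp[of P Q] decidable_imp[of Q P]]]) auto

lemma decidable_const: "decidable (\<lambda>x. P)"
  unfolding decidable_def by (cases P) (simp_all add: computable_const)

lemma decidable_ex_less:
  assumes P: "decidable (\<lambda>p. P (fst (prod_decode p)) (snd (prod_decode p)))" and n: "computable n"
  shows "decidable (\<lambda>x. \<exists>j<n x. P j x)"
proof -
  define G where "G = (\<lambda>z. if fst (prod_decode (snd (prod_decode z))) = 1 \<or>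
     P (fst (prod_decode z)) (snd (prod_decode (snd (prod_decode z)))) then 1 else (0::nat))"
  have dP: "decidable (\<lambda>z. P (fst (prod_decode z)) (snd (prod_decode (snd (prod_decode z)))))"
    using computable_comp[OF P[unfolded decidable_def]
        computable_pair[OF computable_fst[OF computable_id] computable_snd[OF computable_snd[OF computable_id]]]]
    unfolding decidable_def by simp
  have G: "computable G" unfolding G_def
    by (intro computable_if decidable_disj decidable_eq computable_const computable_fst
        computable_snd computable_id dP)
  have "computable (\<lambda>x. natrec (\<lambda>y. 0) G (n x) x)"
    by (intro computable_natrec computable_const G n computable_id)
  moreover have "natrec (\<lambda>y. 0) G m x = (if \<exists>j<m. P j x then 1 else 0)" for m x
    by (induction m) (auto simp: G_def less_Suc_eq)
  ultimately show ?thesis unfolding decidable_def by (rule computable_ext)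
qed

lemma decidable_all_less:
  assumes P: "decidable (\<lambda>p. P (fst (prod_decode p)) (snd (prod_decode p)))" and n: "computable n"
  shows "decidable (\<lambda>x. \<forall>j<n x. P j x)"
  by (rule decidable_ext[OF decidable_not[OF decidable_ex_less[OF decidable_not[OF P] n]]]) auto

lemma decidable_ex_le:
  assumes P: "decidable (\<lambda>p. P (fst (prod_decode p)) (snd (prod_decode p)))" and n: "computable n"
  shows "decidable (\<lambda>x. \<exists>j\<le>n x. P j x)"
  by (rule decidable_ext[OF decidable_ex_less[OF P computable_Suc[OF n]]])
      (auto simp: less_Suc_eq_le)

lemma decidable_all_le:
  assumes P: "decidable (\<lambda>p. P (fst (prod_decode p)) (snd (prod_decode p)))" and n: "computable n"
  shows "decidable (\<lambda>x. \<forall>j\<le>n x. P j x)"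
  by (rule decidable_ext[OF decidable_all_less[OF P computable_Suc[OF n]]])
      (auto simp: less_Suc_eq_le)

lemma divmod8_step: "Suc n div 8 = (if n mod 8 = 7 then Suc (n div 8) else n div 8) \<and>
    Suc n mod 8 = (if n mod 8 = 7 then 0 else Suc (n mod 8))"
  by (auto simp: mod_Suc div_Suc)

lemma computable_divmod8: "computable (\<lambda>x. prod_encode (x div 8, x mod 8))"
proof -
  define G where "G = (\<lambda>z. let s = fst (prod_decode (snd (prod_decode z))) in
     if snd (prod_decode s) = 7 then prod_encode (Suc (fst (prod_decode s)), 0)
     else prod_encode (fst (prod_decode s), Suc (snd (prod_decode s))))"
  have G: "computable G" unfolding G_def Let_def
    by (intro computable_if decidable_eq computable_pair computable_Suc computable_const
        computable_fst computable_snd computable_id)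
  have "computable (\<lambda>x. natrec (\<lambda>y. prod_encode (0,0)) G x x)"
    by (intro computable_natrec computable_const G computable_id)
  moreover have "natrec (\<lambda>y. prod_encode (0,0)) G m x = prod_encode (m div 8, m mod 8)" for m x
    by (induction m) (auto simp: G_def divmod8_step)
  ultimately show ?thesis by (rule computable_ext)
qed

lemma computable_div8: "computable f \<Longrightarrow> computable (\<lambda>x. f x div 8)"
  using computable_fst[OF computable_comp[OF computable_divmod8]] by simp

lemma computable_mod8: "computable f \<Longrightarrow> computable (\<lambda>x. f x mod 8)"
  using computable_snd[OF computable_comp[OF computable_divmod8]] by simp

lemmas computable_intros = computable_id computable_const computable_pair computable_fst
    computable_snd computable_Suc computable_if computable_add computable_sub
  computable_mult computable_pred computable_div8 computable_mod8
  decidable_eq decidable_less decidable_le decidable_not decidable_conj decidable_disj decidable_imp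
      decidable_iff decidable_const
  decidable_ex_less decidable_all_less decidable_ex_le decidable_all_le

lemma decidable_comp: "decidable P \<Longrightarrow> computable f \<Longrightarrow> decidable (\<lambda>x. P (f x))"
  unfolding decidable_def by (drule computable_comp) auto

lemma decidable_bex_fin: "finite F \<Longrightarrow> (\<And>c. c \<in> F \<Longrightarrow> decidable (Q c)) \<Longrightarrow> decidable (\<lambda>x. \<exists>c\<in>F. Q c x)"
proof (induction F rule: finite_induct)
  case empty then show ?case using decidable_const[of False] by simp
next
  case (insert c F)
  have "decidable (\<lambda>x. Q c x \<or> (\<exists>c\<in>F. Q c x))" using insert by (intro decidable_disj) auto
  then show ?case by simp
qed

lemma decidable_fin: assumes "finite F" "computable f" shows "decidable (\<lambda>x. f x \<in> F)"
proof -
  have "decidable (\<lambda>x. \<exists>c\<in>F. f x = c)"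
    by (rule decidable_bex_fin[OF assms(1)]) (intro decidable_eq assms(2) computable_const)
  then show ?thesis by (rule decidable_ext) blast
qed

section \<open>List codes\<close>

definition code_tl :: "nat \<Rightarrow> nat" where
  "code_tl w = (if w = 0 then 0 else snd (prod_decode (w - 1)))"

definition code_hd :: "nat \<Rightarrow> nat" where
  "code_hd w = fst (prod_decode (w - 1))"

lemma list_decode_nonzero: "w \<noteq> 0 \<Longrightarrow> list_decode w = code_hd w # list_decode (code_tl w)"
  by (cases w) (auto simp: code_hd_def code_tl_def split: prod.splits)

lemma list_decode_code_tl: "list_decode (code_tl w) = tl (list_decode w)"
  by (cases "w = 0") (auto simp: list_decode_nonzero code_tl_def)

definition code_drop :: "nat \<Rightarrow> nat \<Rightarrow> nat" where
  "code_drop j w = (code_tl ^^ j) w"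

lemma list_decode_code_drop: "list_decode (code_drop j w) = drop j (list_decode w)"
  unfolding code_drop_def
  by (induction j) (auto simp: list_decode_code_tl drop_Suc tl_drop)

lemma code_drop_zero_iff: "code_drop j w = 0 \<longleftrightarrow> length (list_decode w) \<le> j"
proof -
  have "code_drop j w = 0 \<longleftrightarrow> list_decode (code_drop j w) = []"
    by (metis list_decode.simps(1) list_decode_inverse)
  then show ?thesis by (simp add: list_decode_code_drop)
qed

lemma computable_code_tl: "computable f \<Longrightarrow> computable (\<lambda>x. code_tl (f x))"
  unfolding code_tl_def by (intro computable_intros) 

lemma computable_code_hd: "computable f \<Longrightarrow> computable (\<lambda>x. code_hd (f x))"
  unfolding code_hd_def by (intro computable_intros) 

lemma computable_code_drop: "computable f \<Longrightarrow> computable g \<Longrightarrow> computable (\<lambda>x. code_drop (f x) (g x))"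
proof -
  assume a: "computable f" "computable g"
  have "computable (\<lambda>x. natrec (\<lambda>y. y) (\<lambda>z. code_tl (fst (prod_decode (snd (prod_decode z))))) (f x)
      (g x))"
    by (intro computable_natrec computable_code_tl computable_intros a)
  moreover have "natrec (\<lambda>y. y) (\<lambda>z. code_tl (fst (prod_decode (snd (prod_decode z))))) n m =
      code_drop n m" for n m
    by (induction n) (auto simp: code_drop_def)
  ultimately show ?thesis by (rule computable_ext)
qed

definition code_length :: "nat \<Rightarrow> nat" where
  "code_length w = length (list_decode w)"

definition code_nth :: "nat \<Rightarrow> nat \<Rightarrow> nat" where
  "code_nth w j = (if j < code_length w then list_decode w ! j else 0)"

lemma length_list_decode_le: "length (list_decode w) \<le> w"
proof (induction w rule: list_decode.induct)
  case (2 n)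
  obtain x y where xy: "prod_decode n = (x, y)" by (cases "prod_decode n")
  then have "y \<le> n" by (metis le_prod_encode_2 prod_decode_inverse)
  with 2 xy show ?case by auto
qed simp

lemma computable_code_length: "computable f \<Longrightarrow> computable (\<lambda>x. code_length (f x))"
proof -
  assume a: "computable f"
  define G where "G = (\<lambda>z. fst (prod_decode (snd (prod_decode z))) +
     (if code_drop (fst (prod_decode z)) (snd (prod_decode (snd (prod_decode z)))) = 0
      then 0 else 1))"
  have G: "computable G" unfolding G_def by (intro computable_intros computable_code_drop)
  have "computable (\<lambda>x. natrec (\<lambda>y. 0) G (f x) (f x))"
    by (intro computable_natrec G computable_intros a)
  moreover have "natrec (\<lambda>y. 0) G n w = min n (code_length w)" for n w
    by (induction n) (auto simp: G_def code_drop_zero_iff code_length_def)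
  ultimately show ?thesis
    by (elim computable_ext) (simp add: code_length_def length_list_decode_le min_absorb2)
qed

lemma code_hd_code_drop: "j < length (list_decode w) \<Longrightarrow> code_hd (code_drop j w) = list_decode w ! j"
proof -
  assume j: "j < length (list_decode w)"
  then have "code_drop j w \<noteq> 0" by (simp add: code_drop_zero_iff)
  then have "list_decode (code_drop j w) =
      code_hd (code_drop j w) # list_decode (code_tl (code_drop j w))"
    by (rule list_decode_nonzero)
  then show ?thesis using j by (simp add: list_decode_code_drop hd_drop_conv_nth[symmetric])
qed

lemma computable_code_nth: "computable f \<Longrightarrow> computable g \<Longrightarrow> computable (\<lambda>x. code_nth (f x) (g x))"
proof -
  assume a: "computable f" "computable g"
  have "computable (\<lambda>x. if g x < code_length (f x) then code_hd (code_drop (g x) (f x)) else 0)"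
    by (intro computable_intros computable_code_hd computable_code_drop computable_code_length a)
  then show ?thesis by (rule computable_ext)
      (simp add: code_nth_def code_hd_code_drop code_length_def)
qed

lemma code_length_list_encode[simp]: "code_length (list_encode ws) = length ws"
  by (simp add: code_length_def)

lemma code_nth_list_encode[simp]: "j < length ws \<Longrightarrow> code_nth (list_encode ws) j = ws ! j"
  by (simp add: code_nth_def)

lemma bex_take_code_nth:
  "(\<exists>t\<in>set (take i (list_decode w)). P t) \<longleftrightarrow> (\<exists>j<min i (code_length w). P (code_nth w j))"
proof -
  have "(\<exists>t\<in>set (take i (list_decode w)). P t) \<longleftrightarrow>
      (\<exists>j<length (take i (list_decode w)). P (take i (list_decode w) ! j))"
    by (metis in_set_conv_nth)
  also have "\<dots> \<longleftrightarrow> (\<exists>j<min i (code_length w). P (code_nth w j))"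
    unfolding length_take code_length_def code_nth_def
    by (intro ex_cong1 conj_cong) (simp_all add: min_less_iff_conj conj_commute)
  finally show ?thesis .
qed

section \<open>Computation traces\<close>

definition entry_prog :: "nat \<Rightarrow> nat" where "entry_prog t = fst (prod_decode t)"
definition entry_arg :: "nat \<Rightarrow> nat" where "entry_arg t = fst (prod_decode (snd (prod_decode t)))"
definition entry_val :: "nat \<Rightarrow> nat" where "entry_val t = snd (prod_decode (snd (prod_decode t)))"
definition entry :: "nat \<Rightarrow> nat \<Rightarrow> nat \<Rightarrow> nat" where
  "entry c x y = prod_encode (c, prod_encode (x, y))"

lemma entry_simps[simp]: "entry_prog (entry c x y) = c" "entry_arg (entry c x y) = x"
    "entry_val (entry c x y) = y"
  by (simp_all add: entry_prog_def entry_arg_def entry_val_def entry_def)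

lemma entry_collapse: "entry (entry_prog t) (entry_arg t) (entry_val t) = t"
  by (simp add: entry_prog_def entry_arg_def entry_val_def entry_def)

lemma eq_entry_iff: "t = entry c x y \<longleftrightarrow> entry_prog t = c \<and> entry_arg t = x \<and> entry_val t = y"
proof
  assume "entry_prog t = c \<and> entry_arg t = x \<and> entry_val t = y"
  then show "t = entry c x y" using entry_collapse[of t] by simp
qed simp

definition subprog1 :: "nat \<Rightarrow> nat" where "subprog1 c = fst (prod_decode (c div 8))"
definition subprog2 :: "nat \<Rightarrow> nat" where "subprog2 c = snd (prod_decode (c div 8))"

text \<open>An entry \<langle>c, x, y\<rangle> claims \<open>ev (decode c) x y\<close>. It is justified by the entries in S
  if it follows from them by one rule of \<open>ev\<close>, the rule being selected by c mod 8 as in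
  \<open>decode\<close>. Only bounded searches through S occur, so justification is decidable.\<close>

definition justified :: "nat set \<Rightarrow> nat \<Rightarrow> nat \<Rightarrow> nat \<Rightarrow> bool" where
  "justified S c x y \<longleftrightarrow>
    (c mod 8 = 0 \<and> y = 0) \<or> (c mod 8 = 1 \<and> y = Suc x) \<or>
    (c mod 8 = 2 \<and> y = fst (prod_decode x)) \<or> (c mod 8 = 3 \<and> y = snd (prod_decode x)) \<or>
    (c mod 8 = 4 \<and> (\<exists>t\<in>S. entry_prog t = subprog2 c \<and> entry_arg t = x
        \<and> (\<exists>u\<in>S. entry_prog u = subprog1 c \<and> entry_arg u = entry_val t \<and> entry_val u = y))) \<or>
    (c mod 8 = 5 \<and> (\<exists>t\<in>S. entry_prog t = subprog1 c \<and> entry_arg t = x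
        \<and> (\<exists>u\<in>S. entry_prog u = subprog2 c \<and> entry_arg u = x
        \<and> y = prod_encode (entry_val t, entry_val u)))) \<or>
    (c mod 8 = 6 \<and> fst (prod_decode x) = 0
        \<and> (\<exists>t\<in>S. entry_prog t = subprog1 c \<and> entry_arg t = snd (prod_decode x) \<and> entry_val t = y)) \<or>
    (c mod 8 = 6 \<and> fst (prod_decode x) \<noteq> 0
        \<and> (\<exists>t\<in>S. entry_prog t = c
        \<and> entry_arg t = prod_encode (fst (prod_decode x) - 1, snd (prod_decode x)) \<and>
        (\<exists>u\<in>S. entry_prog u = subprog2 c
            \<and> entry_arg u =
              prod_encode (fst (prod_decode x) - 1, prod_encode (entry_val t, snd (prod_decode x)))
            \<and> entry_val u = y))) \<or>
    (c mod 8 = 7 \<and> (\<exists>t\<in>S. entry_prog t = c div 8 \<and> entry_arg t = prod_encode (y, x)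
        \<and> entry_val t = 0) \<and>
        (\<forall>z<y. \<exists>t\<in>S. entry_prog t = c div 8 \<and> entry_arg t = prod_encode (z, x) \<and> entry_val t \<noteq> 0))"

definition justified_entry :: "nat set \<Rightarrow> nat \<Rightarrow> bool" where
  "justified_entry S e \<longleftrightarrow> justified S (entry_prog e) (entry_arg e) (entry_val e)"

lemma justified_mono: assumes "justified S c x y" "S \<subseteq> S'" shows "justified S' c x y"
  using assms unfolding justified_def by (smt (verit) subsetD)

definition entry_correct :: "nat \<Rightarrow> bool" where
  "entry_correct t \<longleftrightarrow> ev (decode (entry_prog t)) (entry_arg t) (entry_val t)"

lemma decode_mod8: "c mod 8 = m
    \<Longrightarrow> decode c = (if m = 0 then Zero else if m = 1 then Succ else if m = 2 then Left
   else if m = 3 then Right else if m = 4 then Comp (decode (subprog1 c)) (decode (subprog2 c))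
   else if m = 5 then Pair (decode (subprog1 c)) (decode (subprog2 c))
   else if m = 6 then Rec (decode (subprog1 c)) (decode (subprog2 c)) else Mu (decode (c div 8)))"
  by (subst decode.simps) (simp add: subprog1_def subprog2_def)

lemma justified_sound:
  assumes S: "\<forall>t\<in>S. entry_correct t" and j: "justified S c x y"
  shows "ev (decode c) x y"
proof -
  have S': "ev (decode (entry_prog t)) (entry_arg t) (entry_val t)" if "t \<in> S" for t
    using S that unfolding entry_correct_def by blast
  have S_Mu: "\<forall>z<y. \<exists>v. v \<noteq> 0 \<and> ev (decode d) (prod_encode (z, a)) v"
    if "\<forall>z<y. \<exists>t\<in>S. entry_prog t = d \<and> entry_arg t = prod_encode (z, a) \<and> entry_val t \<noteq> 0" for d a
    using that S' by metis
  obtain n x' where x: "x = prod_encode (n, x')" by (metis prod_decode_inverse prod.collapse)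
  from j show ?thesis
    unfolding justified_def x prod_encode_inverse fst_conv snd_conv
    apply (elim disjE conjE bexE)
    subgoal using decode_mod8[of c 0] by (simp add: ev_Zero)
    subgoal using decode_mod8[of c 1] by (simp add: ev_Succ)
    subgoal using decode_mod8[of c 2] ev_Left[of "prod_encode (n, x')"] by simp
    subgoal using decode_mod8[of c 3] ev_Right[of "prod_encode (n, x')"] by simp
    subgoal for t u using S'[of t] S'[of u] decode_mod8[of c 4] by (auto intro: ev_Comp)
    subgoal for t u using S'[of t] S'[of u] decode_mod8[of c 5] by (auto intro: ev_Pair)
    subgoal for t using S'[of t] decode_mod8[of c 6] by (auto intro: ev_Rec0)
    subgoal for t u using S'[of t] S'[of u] decode_mod8[of c 6] ev_RecS[of _ _ "n - 1" x' "entry_val t"]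
      by (cases n) auto
    subgoal for t using S'[of t] decode_mod8[of c 7] S_Mu by (auto intro!: ev_Mu)
    done
qed

definition trace :: "nat list \<Rightarrow> bool" where
  "trace ws \<longleftrightarrow> (\<forall>i<length ws. justified_entry (set (take i ws)) (ws ! i))"

lemma trace_sound: "trace ws \<Longrightarrow> t \<in> set ws \<Longrightarrow> entry_correct t"
proof -
  assume v: "trace ws"
  have "\<forall>j<i. j < length ws \<longrightarrow> entry_correct (ws ! j)" for i
  proof (induction i)
    case (Suc i)
    show ?case
    proof (intro allI impI)
      fix j assume j: "j < Suc i" "j < length ws"
      show "entry_correct (ws ! j)"
      proof (cases "j < i")
        case True then show ?thesis using Suc j by auto
      next
        case False
        then have ji: "j = i" using j by auto
        have "\<forall>t\<in>set (take i ws). entry_correct t"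
          using Suc j ji by (auto simp: in_set_conv_nth)
        moreover have "justified_entry (set (take i ws)) (ws ! i)" using v j ji unfolding trace_def
          by auto
        ultimately have "ev (decode (entry_prog (ws ! i))) (entry_arg (ws ! i))
            (entry_val (ws ! i))"
          unfolding justified_entry_def by (rule justified_sound)
        then show ?thesis by (simp add: entry_correct_def ji)
      qed
    qed
  qed simp
  then show "t \<in> set ws \<Longrightarrow> entry_correct t" by (metis in_set_conv_nth lessI)
qed

lemma trace_append: "trace a \<Longrightarrow> trace b \<Longrightarrow> trace (a @ b)"
  unfolding trace_def
proof (intro allI impI)
  fix i assume va: "\<forall>i<length a. justified_entry (set (take i a)) (a ! i)"
    and vb: "\<forall>i<length b. justified_entry (set (take i b)) (b ! i)" and i: "i < length (a @ b)"
  show "justified_entry (set (take i (a @ b))) ((a @ b) ! i)"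
  proof (cases "i < length a")
    case True then show ?thesis using va by (simp add: nth_append)
  next
    case False
    then have "i - length a < length b" using i by simp
    then have "justified_entry (set (take (i - length a) b)) (b ! (i - length a))" using vb by simp
    moreover have "set (take (i - length a) b) \<subseteq> set (take i (a @ b))" using False by auto
    ultimately show ?thesis using False unfolding justified_entry_def
      by (simp add: nth_append justified_mono)
  qed
qed

lemma trace_snoc: assumes "trace a" "justified_entry (set a) e" shows "trace (a @ [e])"
  unfolding trace_def
proof (intro allI impI)
  fix i assume i: "i < length (a @ [e])"
  show "justified_entry (set (take i (a @ [e]))) ((a @ [e]) ! i)"
  proof (cases "i < length a")
    case True then show ?thesis using assms(1) unfolding trace_def by (simp add: nth_append)
  next
    case False then have "i = length a" using i by simp
    then show ?thesis using assms(2) by simp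
  qed
qed

lemma trace_Nil: "trace []" by (simp add: trace_def)

lemma decode_eqD:
  "decode c = Zero \<Longrightarrow> c mod 8 = 0"
  "decode c = Succ \<Longrightarrow> c mod 8 = 1"
  "decode c = Left \<Longrightarrow> c mod 8 = 2"
  "decode c = Right \<Longrightarrow> c mod 8 = 3"
  "decode c = Comp f g \<Longrightarrow> c mod 8 = 4 \<and> decode (subprog1 c) = f \<and> decode (subprog2 c) = g"
  "decode c = Pair f g \<Longrightarrow> c mod 8 = 5 \<and> decode (subprog1 c) = f \<and> decode (subprog2 c) = g"
  "decode c = Rec f g \<Longrightarrow> c mod 8 = 6 \<and> decode (subprog1 c) = f \<and> decode (subprog2 c) = g"
  "decode c = Mu f \<Longrightarrow> c mod 8 = 7 \<and> decode (c div 8) = f"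
  using decode_mod8[of c "c mod 8"] by (auto split: if_splits)

lemma justified_ZeroI: "c mod 8 = 0 \<Longrightarrow> justified S c x 0"
  unfolding justified_def by simp
lemma justified_SuccI: "c mod 8 = 1 \<Longrightarrow> justified S c x (Suc x)"
  unfolding justified_def by simp
lemma justified_LeftI: "c mod 8 = 2 \<Longrightarrow> justified S c x (fst (prod_decode x))"
  unfolding justified_def by simp
lemma justified_RightI: "c mod 8 = 3 \<Longrightarrow> justified S c x (snd (prod_decode x))"
  unfolding justified_def by simp
lemma justified_CompI: "c mod 8 = 4 \<Longrightarrow> entry (subprog2 c) x y \<in> S \<Longrightarrow> entry (subprog1 c) y z \<in> S
    \<Longrightarrow> justified S c x z"
  unfolding justified_def
  by (simp (no_asm_simp))
    (rule bexI[of _ "entry (subprog2 c) x y"]; auto intro!: bexI[of _ "entry (subprog1 c) y z"])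
lemma justified_PairI: "c mod 8 = 5 \<Longrightarrow> entry (subprog1 c) x y \<in> S \<Longrightarrow> entry (subprog2 c) x z \<in> S
    \<Longrightarrow> justified S c x (prod_encode (y, z))"
  unfolding justified_def
  by (simp (no_asm_simp))
    (rule bexI[of _ "entry (subprog1 c) x y"]; auto intro!: bexI[of _ "entry (subprog2 c) x z"])
lemma justified_Rec0I: "c mod 8 = 6 \<Longrightarrow> entry (subprog1 c) x y \<in> S
    \<Longrightarrow> justified S c (prod_encode (0, x)) y"
  unfolding justified_def by (simp (no_asm_simp)) (auto intro!: bexI[of _ "entry (subprog1 c) x y"])
lemma justified_RecSI: "c mod 8 = 6 \<Longrightarrow> entry c (prod_encode (n, x)) y \<in> S \<Longrightarrow>
    entry (subprog2 c) (prod_encode (n, prod_encode (y, x))) z \<in> S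
        \<Longrightarrow> justified S c (prod_encode (Suc n, x)) z"
  unfolding justified_def
  by (simp (no_asm_simp))
    (rule bexI[of _ "entry c (prod_encode (n, x)) y"];
     auto intro!: bexI[of _ "entry (subprog2 c) (prod_encode (n, prod_encode (y, x))) z"])
lemma justified_MuI:
  assumes "c mod 8 = 7" "entry (c div 8) (prod_encode (y, x)) 0 \<in> S"
    "\<forall>z<y. \<exists>v. v \<noteq> 0 \<and> entry (c div 8) (prod_encode (z, x)) v \<in> S"
  shows "justified S c x y"
proof -
  have "\<forall>z<y. \<exists>t\<in>S. entry_prog t = c div 8 \<and> entry_arg t = prod_encode (z, x) \<and> entry_val t \<noteq> 0"
    using assms(3) by (metis entry_simps)
  then show ?thesis
    unfolding justified_def using assms(1,2)
    by (simp (no_asm_simp)) (auto intro!: bexI[of _ "entry (c div 8) (prod_encode (y, x)) 0"])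
qed

lemma trace_extend: "trace ws \<Longrightarrow> justified (set ws) c x y \<Longrightarrow> \<exists>ws'. trace ws' \<and> entry c x y \<in> set ws'"
  by (rule exI[of _ "ws @ [entry c x y]"]) (simp add: trace_snoc justified_entry_def)

lemma trace_combine:
  fixes m :: nat
  assumes "\<And>z. z < m \<Longrightarrow> \<exists>ws. trace ws \<and> Q z (set ws)" and "\<And>z S S'. Q z S \<Longrightarrow> S \<subseteq> S' \<Longrightarrow> Q z S'"
  shows "\<exists>ws. trace ws \<and> (\<forall>z<m. Q z (set ws))"
  using assms(1)
proof (induction m)
  case 0
  show ?case using trace_Nil by blast
next
  case (Suc m)
  obtain ws where ws: "trace ws" "\<forall>z<m. Q z (set ws)" using Suc.IH Suc.prems by (meson less_SucI)
  obtain ws' where ws': "trace ws'" "Q m (set ws')" using Suc.prems by blast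
  have "\<forall>z<Suc m. Q z (set (ws @ ws'))" using ws(2) ws'(2) assms(2) by (auto simp: less_Suc_eq)
  then show ?case using trace_append[OF ws(1) ws'(1)] by blast
qed

lemma ev_has_trace:
  "ev p x y \<Longrightarrow> decode c = p \<Longrightarrow> \<exists>ws. trace ws \<and> entry c x y \<in> set ws"
proof (induction arbitrary: c rule: ev.induct)
  case (ev_Comp g x y f z)
  note d = decode_eqD(5)[OF ev_Comp.prems]
  obtain w1 where w1: "trace w1" "entry (subprog2 c) x y \<in> set w1" using ev_Comp.IH(1) d by blast
  obtain w2 where w2: "trace w2" "entry (subprog1 c) y z \<in> set w2" using ev_Comp.IH(2) d by blast
  show ?case by (rule trace_extend[OF trace_append[OF w1(1) w2(1)] justified_CompI])
      (use d w1 w2 in auto)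
next
  case (ev_Pair f x y g z)
  note d = decode_eqD(6)[OF ev_Pair.prems]
  obtain w1 where w1: "trace w1" "entry (subprog1 c) x y \<in> set w1" using ev_Pair.IH(1) d by blast
  obtain w2 where w2: "trace w2" "entry (subprog2 c) x z \<in> set w2" using ev_Pair.IH(2) d by blast
  show ?case by (rule trace_extend[OF trace_append[OF w1(1) w2(1)] justified_PairI])
      (use d w1 w2 in auto)
next
  case (ev_Rec0 f x y g)
  note d = decode_eqD(7)[OF ev_Rec0.prems]
  obtain w1 where w1: "trace w1" "entry (subprog1 c) x y \<in> set w1" using ev_Rec0.IH d by blast
  show ?case by (rule trace_extend[OF w1(1) justified_Rec0I]) (use d w1 in auto)
next
  case (ev_RecS f g n x y z)
  note d = decode_eqD(7)[OF ev_RecS.prems]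
  obtain w1 where w1: "trace w1"
      "entry c (prod_encode (n, x)) y \<in> set w1" using ev_RecS.IH(1) ev_RecS.prems by blast
  obtain w2 where w2: "trace w2"
      "entry (subprog2 c) (prod_encode (n, prod_encode (y, x))) z \<in> set w2"
    using ev_RecS.IH(2) d by blast
  show ?case by (rule trace_extend[OF trace_append[OF w1(1) w2(1)] justified_RecSI])
      (use d w1 w2 in auto)
next
  case (ev_Mu f y x)
  note d = decode_eqD(8)[OF ev_Mu.prems]
  obtain w1 where w1: "trace w1" "entry (c div 8) (prod_encode (y, x)) 0 \<in> set w1"
    using ev_Mu.IH(1) d by blast
  have "\<exists>ws. trace ws \<and> (\<forall>z<y. \<exists>v. v \<noteq> 0 \<and> entry (c div 8) (prod_encode (z, x)) v \<in> set ws)"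
  proof (rule trace_combine)
    fix z assume "z < y"
    with ev_Mu.IH(2) obtain v where "v \<noteq> 0"
      "\<forall>c'. decode c' = f \<longrightarrow> (\<exists>ws. trace ws \<and> entry c' (prod_encode (z, x)) v \<in> set ws)"
      by blast
    with d show "\<exists>ws. trace ws \<and> (\<exists>v. v \<noteq> 0 \<and> entry (c div 8) (prod_encode (z, x)) v \<in> set ws)"
      by blast
  qed blast
  then obtain w2 where w2: "trace w2"
      "\<forall>z<y. \<exists>v. v \<noteq> 0 \<and> entry (c div 8) (prod_encode (z, x)) v \<in> set w2"
    by blast
  show ?case
  proof (rule trace_extend[OF trace_append[OF w1(1) w2(1)] justified_MuI])
    show "c mod 8 = 7" using d by simp
    show "entry (c div 8) (prod_encode (y, x)) 0 \<in> set (w1 @ w2)" using w1 by simp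
    show "\<forall>z<y. \<exists>v. v \<noteq> 0 \<and> entry (c div 8) (prod_encode (z, x)) v \<in> set (w1 @ w2)" using w2 by auto
  qed
qed (rule trace_extend[OF trace_Nil], use decode_eqD(1-4) in
    \<open>blast intro: justified_ZeroI justified_SuccI justified_LeftI justified_RightI\<close>)+

definition trace_code :: "nat \<Rightarrow> bool" where
  "trace_code w \<longleftrightarrow> (\<forall>i<code_length w. justified_entry (set (take i (list_decode w))) (code_nth w i))"

lemma trace_code_list_encode: "trace_code (list_encode ws) = trace ws"
  unfolding trace_code_def trace_def by simp

lemma computable_min: "computable f \<Longrightarrow> computable g \<Longrightarrow> computable (\<lambda>x. min (f x) (g x))"
  unfolding min_def by (intro computable_intros)

lemma computable_entry_prog: "computable f \<Longrightarrow> computable (\<lambda>x. entry_prog (f x))"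
  unfolding entry_prog_def by (intro computable_intros)
lemma computable_entry_arg: "computable f \<Longrightarrow> computable (\<lambda>x. entry_arg (f x))"
  unfolding entry_arg_def by (intro computable_intros)
lemma computable_entry_val: "computable f \<Longrightarrow> computable (\<lambda>x. entry_val (f x))"
  unfolding entry_val_def by (intro computable_intros)
lemma computable_subprog1: "computable f \<Longrightarrow> computable (\<lambda>x. subprog1 (f x))" unfolding subprog1_def
  by (intro computable_intros)
lemma computable_subprog2: "computable f \<Longrightarrow> computable (\<lambda>x. subprog2 (f x))" unfolding subprog2_def
  by (intro computable_intros)
lemma computable_entry: "computable f \<Longrightarrow> computable g \<Longrightarrow> computable h
    \<Longrightarrow> computable (\<lambda>x. entry (f x) (g x) (h x))"
  unfolding entry_def by (intro computable_intros)

lemmas computable_code_intros = computable_intros computable_min computable_entry_prog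
    computable_entry_arg computable_entry_val computable_subprog1 computable_subprog2
    computable_entry computable_code_nth computable_code_length

lemma decidable_trace_code: "decidable trace_code"
  unfolding trace_code_def justified_entry_def justified_def bex_take_code_nth
  by (intro computable_code_intros)

lemma decidable_trace_code_comp: "computable f \<Longrightarrow> decidable (\<lambda>x. trace_code (f x))"
  by (rule decidable_comp[OF decidable_trace_code])

lemma trace_code_sound: "trace_code w \<Longrightarrow> i < code_length w \<Longrightarrow> entry_correct (code_nth w i)"
  using trace_sound[of "list_decode w" "code_nth w i"] trace_code_list_encode[of "list_decode w"]
  by (simp add: code_nth_def code_length_def)

lemma ev_iff_trace_code: "ev (decode e) x y
    \<longleftrightarrow> (\<exists>w. trace_code w \<and> (\<exists>i<code_length w. code_nth w i = entry e x y))"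
proof
  assume "ev (decode e) x y"
  then obtain ws where ws: "trace ws" "entry e x y \<in> set ws" using ev_has_trace by blast
  then obtain i where "i < length ws" "ws ! i = entry e x y" by (metis in_set_conv_nth)
  then show "\<exists>w. trace_code w \<and> (\<exists>i<code_length w. code_nth w i = entry e x y)"
    using ws by (intro exI[of _ "list_encode ws"]) (auto simp: trace_code_list_encode)
next
  assume "\<exists>w. trace_code w \<and> (\<exists>i<code_length w. code_nth w i = entry e x y)"
  then obtain w i where "trace_code w" "i < code_length w" "code_nth w i = entry e x y" by blast
  then show "ev (decode e) x y" using trace_code_sound[of w i] by (simp add: entry_correct_def)
qed

definition kleene_T :: "nat \<Rightarrow> nat \<Rightarrow> nat \<Rightarrow> bool" where
  "kleene_T e x w \<longleftrightarrow> trace_code w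
      \<and> (\<exists>i<code_length w. entry_prog (code_nth w i) = e \<and> entry_arg (code_nth w i) = x)"

lemma halts_iff_kleene_T: "phi e x \<noteq> None \<longleftrightarrow> (\<exists>w. kleene_T e x w)"
proof -
  have "phi e x \<noteq> None \<longleftrightarrow> (\<exists>y w. trace_code w \<and> (\<exists>i<code_length w. code_nth w i = entry e x y))"
    unfolding phi_None ev_iff_trace_code by (rule refl)
  also have "\<dots> \<longleftrightarrow> (\<exists>w. kleene_T e x w)"
    unfolding kleene_T_def eq_entry_iff by blast
  finally show ?thesis .
qed

lemma decidable_kleene_T:
  assumes "computable e" "computable x" "computable w"
  shows "decidable (\<lambda>q. kleene_T (e q) (x q) (w q))"
proof -
  have "decidable (\<lambda>q. kleene_T (fst (prod_decode q)) (fst (prod_decode (snd (prod_decode q))))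
      (snd (prod_decode (snd (prod_decode q)))))"
    unfolding kleene_T_def by (intro computable_code_intros decidable_trace_code_comp)
  from decidable_comp[OF this computable_pair[OF assms(1) computable_pair[OF assms(2,3)]]]
  show ?thesis by simp
qed

definition kleene_T_val :: "nat \<Rightarrow> nat \<Rightarrow> nat \<Rightarrow> nat \<Rightarrow> bool" where
  "kleene_T_val e x y w \<longleftrightarrow> trace_code w
      \<and> (\<exists>i<code_length w. entry_prog (code_nth w i) = e \<and> entry_arg (code_nth w i) = x
      \<and> entry_val (code_nth w i) = y)"

lemma decidable_kleene_T_val:
  assumes "computable e" "computable x" "computable y" "computable w"
  shows "decidable (\<lambda>q. kleene_T_val (e q) (x q) (y q) (w q))"
proof -
  have "decidable (\<lambda>q. kleene_T_val (fst (prod_decode q)) (fst (prod_decode (snd (prod_decode q))))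
      (fst (prod_decode (snd (prod_decode (snd (prod_decode q))))))
          (snd (prod_decode (snd (prod_decode (snd (prod_decode q)))))))"
    unfolding kleene_T_val_def by (intro computable_code_intros decidable_trace_code_comp)
  from decidable_comp[OF this computable_pair[OF assms(1) computable_pair[OF assms(2)
      computable_pair[OF assms(3,4)]]]]
  show ?thesis by simp
qed

lemma phi_Some_kleene_T_val: "phi e x = Some y \<longleftrightarrow> (\<exists>w. kleene_T_val e x y w)"
  unfolding phi_Some ev_iff_trace_code eq_entry_iff kleene_T_val_def by simp

section \<open>Projections of decidable relations\<close>

definition sigma1 :: "nat set \<Rightarrow> bool" where
  "sigma1 S \<longleftrightarrow> (\<exists>P. decidable (\<lambda>p. P (fst (prod_decode p)) (snd (prod_decode p)))
      \<and> S = {x. \<exists>w. P w x})"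

lemma sigma1I: "decidable (\<lambda>p. P (fst (prod_decode p)) (snd (prod_decode p)))
    \<Longrightarrow> sigma1 {x. \<exists>w. P w x}"
  unfolding sigma1_def by blast

lemma ev_Mu_iff:
  assumes pf: "\<And>x. ev pf x (F x)"
  shows "ev (Mu pf) x y \<longleftrightarrow> F (prod_encode (y, x)) = 0 \<and> (\<forall>z<y. F (prod_encode (z, x)) \<noteq> 0)"
proof
  assume "ev (Mu pf) x y"
  then show "F (prod_encode (y, x)) = 0 \<and> (\<forall>z<y. F (prod_encode (z, x)) \<noteq> 0)"
  proof (cases rule: ev.cases)
    case ev_Mu
    then show ?thesis using pf ev_det by metis
  qed
next
  assume a: "F (prod_encode (y, x)) = 0 \<and> (\<forall>z<y. F (prod_encode (z, x)) \<noteq> 0)"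
  show "ev (Mu pf) x y"
  proof (rule ev_Mu)
    show "ev pf (prod_encode (y, x)) 0" using pf[of "prod_encode (y, x)"] a by simp
    show "\<forall>z<y. \<exists>v. v \<noteq> 0 \<and> ev pf (prod_encode (z, x)) v" using pf a by blast
  qed
qed

lemma sigma1_imp_ce: assumes "sigma1 S" shows "ce S"
proof -
  obtain P where P: "decidable (\<lambda>p. P (fst (prod_decode p)) (snd (prod_decode p)))" and S:
      "S = {x. \<exists>w. P w x}"
    using assms unfolding sigma1_def by blast
  define F where "F = (\<lambda>p. 1 -
      (if P (fst (prod_decode p)) (snd (prod_decode p)) then 1 else (0::nat)))"
  have "computable F" unfolding F_def using P by (intro computable_intros)
  then obtain pf where pf: "\<And>x. ev pf x (F x)" unfolding computable_def by blast
  have "x \<in> S \<longleftrightarrow> (\<exists>y. ev (Mu pf) x y)" for x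
  proof
    assume "x \<in> S"
    then have ex: "\<exists>w. P w x" using S by simp
    define y where "y = (LEAST w. P w x)"
    have "P y x" unfolding y_def using ex by (metis LeastI)
    moreover have "\<forall>z<y. \<not> P z x" unfolding y_def using not_less_Least by blast
    ultimately have "ev (Mu pf) x y" using ev_Mu_iff[OF pf] by (simp add: F_def)
    then show "\<exists>y. ev (Mu pf) x y" by blast
  next
    assume "\<exists>y. ev (Mu pf) x y"
    then obtain y where "ev (Mu pf) x y" by blast
    then have "F (prod_encode (y, x)) = 0" using ev_Mu_iff[OF pf] by blast
    then have "P y x" by (simp add: F_def split: if_splits)
    then show "x \<in> S" using S by blast
  qed
  then have "S = {x. \<exists>y. ev (decode (code_of (Mu pf))) x y}" unfolding decode_code_of by blast
  then have "S = {x. phi (code_of (Mu pf)) x \<noteq> None}" by (simp only: phi_None)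
  then show ?thesis unfolding ce_def by blast
qed

lemma sigma1_Un: assumes "sigma1 S" "sigma1 T" shows "sigma1 (S \<union> T)"
proof -
  obtain P where P: "decidable (\<lambda>p. P (fst (prod_decode p)) (snd (prod_decode p)))" and S:
      "S = {x. \<exists>w. P w x}"
    using assms(1) unfolding sigma1_def by blast
  obtain Q where Q: "decidable (\<lambda>p. Q (fst (prod_decode p)) (snd (prod_decode p)))" and T:
      "T = {x. \<exists>w. Q w x}"
    using assms(2) unfolding sigma1_def by blast
  have "decidable (\<lambda>p. P (fst (prod_decode p)) (snd (prod_decode p))
      \<or> Q (fst (prod_decode p)) (snd (prod_decode p)))"
    using P Q by (rule decidable_disj)
  then have "sigma1 {x. \<exists>w. P w x \<or> Q w x}" by (rule sigma1I)
  moreover have "{x. \<exists>w. P w x \<or> Q w x} = S \<union> T" using S T by auto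
  ultimately show ?thesis by simp
qed

lemma sigma1_Int: assumes "sigma1 S" "sigma1 T" shows "sigma1 (S \<inter> T)"
proof -
  obtain P where P: "decidable (\<lambda>p. P (fst (prod_decode p)) (snd (prod_decode p)))" and S:
      "S = {x. \<exists>w. P w x}"
    using assms(1) unfolding sigma1_def by blast
  obtain Q where Q: "decidable (\<lambda>p. Q (fst (prod_decode p)) (snd (prod_decode p)))" and T:
      "T = {x. \<exists>w. Q w x}"
    using assms(2) unfolding sigma1_def by blast
  have P': "decidable (\<lambda>p. P (fst (prod_decode (fst (prod_decode p)))) (snd (prod_decode p)))"
    using decidable_comp[OF P computable_pair[OF computable_fst[OF computable_fst[OF computable_id]]
        computable_snd[OF computable_id]]] by simp
  have Q': "decidable (\<lambda>p. Q (snd (prod_decode (fst (prod_decode p)))) (snd (prod_decode p)))"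
    using decidable_comp[OF Q computable_pair[OF computable_snd[OF computable_fst[OF computable_id]]
        computable_snd[OF computable_id]]] by simp
  have "sigma1 {x. \<exists>w. P (fst (prod_decode w)) x \<and> Q (snd (prod_decode w)) x}"
    by (rule sigma1I) (rule decidable_conj[OF P' Q'])
  moreover have "{x. \<exists>w. P (fst (prod_decode w)) x \<and> Q (snd (prod_decode w)) x} = S \<inter> T"
    using S T by auto (metis prod_encode_inverse fst_conv snd_conv)
  ultimately show ?thesis by simp
qed

lemma sigma1_decidable: "decidable P \<Longrightarrow> sigma1 {x. P x}"
  using sigma1I[of "\<lambda>w x. P x"] decidable_comp[of P
      "\<lambda>p. snd (prod_decode p)"] computable_snd[OF computable_id] by simp

lemma sigma1_proj: assumes "sigma1 S" shows "sigma1 {x. \<exists>y. prod_encode (x, y) \<in> S}"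
proof -
  obtain P where P: "decidable (\<lambda>p. P (fst (prod_decode p)) (snd (prod_decode p)))" and S:
      "S = {x. \<exists>w. P w x}"
    using assms(1) unfolding sigma1_def by blast
  have P': "decidable (\<lambda>p. P (fst (prod_decode (fst (prod_decode p))))
      (prod_encode (snd (prod_decode p), snd (prod_decode (fst (prod_decode p))))))"
    using decidable_comp[OF P computable_pair[OF computable_fst[OF computable_fst[OF computable_id]]
        computable_pair[OF computable_snd[OF computable_id]
          computable_snd[OF computable_fst[OF computable_id]]]]]
    by simp
  have "sigma1 {x. \<exists>w. P (fst (prod_decode w)) (prod_encode (x, snd (prod_decode w)))}"
    by (rule sigma1I) (rule P')
  moreover have "{x. \<exists>w. P (fst (prod_decode w)) (prod_encode (x, snd (prod_decode w)))} = {x. \<exists>y.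
      prod_encode (x, y) \<in> S}"
    using S by auto (metis prod_encode_inverse fst_conv snd_conv)
  ultimately show ?thesis by simp
qed

lemma sigma1_UN: "finite I \<Longrightarrow> (\<And>i. i \<in> I \<Longrightarrow> sigma1 (S i)) \<Longrightarrow> sigma1 (\<Union>i\<in>I. S i)"
proof (induction I rule: finite_induct)
  case empty
  have "sigma1 {x. False}" by (rule sigma1_decidable) (rule decidable_const)
  then show ?case by simp
next
  case (insert i I) then show ?case using sigma1_Un by simp
qed

lemma sigma1_INT: "finite I \<Longrightarrow> (\<And>i. i \<in> I \<Longrightarrow> sigma1 (S i)) \<Longrightarrow> sigma1 (\<Inter>i\<in>I. S i)"
proof (induction I rule: finite_induct)
  case empty
  have "sigma1 {x. True}" by (rule sigma1_decidable) (rule decidable_const)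
  then show ?case by simp
next
  case (insert i I) then show ?case using sigma1_Int by simp
qed

section \<open>The s-m-n theorem\<close>

primrec code_of_const_prog :: "nat \<Rightarrow> nat" where
  "code_of_const_prog 0 = 0"
| "code_of_const_prog (Suc n) = 4 + 8 * prod_encode (1, code_of_const_prog n)"

lemma code_of_const_prog: "code_of (const_prog n) = code_of_const_prog n"
  by (induction n) auto

lemma computable_code_of_const_prog: "computable f \<Longrightarrow> computable (\<lambda>x. code_of_const_prog (f x))"
proof -
  assume f: "computable f"
  have "computable (\<lambda>x. natrec (\<lambda>y. 0)
      (\<lambda>z. 4 + 8 * prod_encode (1, fst (prod_decode (snd (prod_decode z))))) (f x) 0)"
    by (intro computable_natrec computable_intros f)
  moreover have "natrec (\<lambda>y. 0)
      (\<lambda>z. 4 + 8 * prod_encode (1, fst (prod_decode (snd (prod_decode z))))) n m =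
      code_of_const_prog n" for n m
    by (induction n) auto
  ultimately show ?thesis by (elim computable_ext) simp
qed

lemma smn:
  assumes "computable (\<lambda>p. D (fst (prod_decode p)) (snd (prod_decode p)))"
  shows "\<exists>f. total_computable f \<and> (\<forall>n x. phi (f n) x = Some (D n x))"
proof -
  obtain P where P: "\<And>x. ev P x (D (fst (prod_decode x)) (snd (prod_decode x)))"
    using assms unfolding computable_def by blast
  define f where "f n = code_of (Comp P (Pair (const_prog n) (Pair Left Right)))" for n
  have ev: "ev (decode (f n)) x (D n x)" for n x
  proof -
    have "ev (Pair Left Right) x x"
      by (metis ev_Left ev_Pair ev_Right prod.collapse prod_decode_inverse)
    then have "ev (Pair (const_prog n) (Pair Left Right)) x (prod_encode (n, x))"
      by (rule ev_Pair[OF ev_const_prog])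
    from ev_Comp[OF this P] show ?thesis unfolding f_def decode_code_of by simp
  qed
  have eq: "4 + 8 * prod_encode
      (code_of P, 5 + 8 * prod_encode (code_of_const_prog n, 5 + 8 * prod_encode (2, 3))) = f n"
    for n
    by (simp add: f_def code_of_const_prog)
  have "computable (\<lambda>n. 4 + 8 * prod_encode
      (code_of P, 5 + 8 * prod_encode (code_of_const_prog n, 5 + 8 * prod_encode (2, 3))))"
    by (intro computable_intros computable_code_of_const_prog)
  then have "computable f" using eq by (rule computable_ext)
  then show ?thesis using ev phi_ev computable_total_computable by blast
qed

section \<open>Atomic diagrams and indices\<close>

definition lit_sign :: "nat \<Rightarrow> nat" where "lit_sign x = fst (prod_decode x)"
definition lit_kind :: "nat \<Rightarrow> nat" where "lit_kind x = fst (prod_decode (snd (prod_decode x)))"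
definition lit_args :: "nat \<Rightarrow> nat" where "lit_args x = snd (prod_decode (snd (prod_decode x)))"

lemma computable_lit_sign: "computable f \<Longrightarrow> computable (\<lambda>x. lit_sign (f x))" unfolding lit_sign_def
  by (intro computable_intros)
lemma computable_lit_kind: "computable f \<Longrightarrow> computable (\<lambda>x. lit_kind (f x))" unfolding lit_kind_def
  by (intro computable_intros)
lemma computable_lit_args: "computable f \<Longrightarrow> computable (\<lambda>x. lit_args (f x))" unfolding lit_args_def
  by (intro computable_intros)

definition arity_table :: "nat list \<Rightarrow> nat set" where
  "arity_table ar = (\<lambda>i. prod_encode (i, ar ! i)) ` {..<length ar}"

lemma finite_arity_table: "finite (arity_table ar)" unfolding arity_table_def by simp

lemma arity_table_iff: "prod_encode (i, m) \<in> arity_table ar \<longleftrightarrow> i < length ar \<and> m = ar ! i"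
  unfolding arity_table_def by auto

lemma lit_parts:
  "lit_sign (lit_code p at) = (if p then 1 else 0)"
  "lit_kind (lit_code p (AEq a b)) = 0" "lit_args (lit_code p (AEq a b)) = prod_encode (a, b)"
  "lit_kind (lit_code p (ARel i xs)) = Suc i" "lit_args (lit_code p (ARel i xs)) = list_encode xs"
  by (simp_all add: lit_sign_def lit_kind_def lit_args_def lit_code_def)

lemma lit_parts_collapse: "x = prod_encode (lit_sign x, prod_encode (lit_kind x, lit_args x))"
  by (simp add: lit_sign_def lit_kind_def lit_args_def)

text \<open>Diagram membership read off a literal code \<langle>sign, \<langle>kind, args\<rangle>\<rangle>, where kind 0 is
  equality and kind i + 1 the i-th relation, whose instances R decides.\<close>

definition diagram_pred :: "nat list \<Rightarrow> nat set \<Rightarrow> (nat \<Rightarrow> nat \<Rightarrow> bool) \<Rightarrow> nat \<Rightarrow> bool" where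
  "diagram_pred ar U R x \<longleftrightarrow> lit_sign x \<le> 1 \<and>
    ((lit_kind x = 0 \<and> fst (prod_decode (lit_args x)) \<in> U \<and> snd (prod_decode (lit_args x)) \<in> U \<and>
        (fst (prod_decode (lit_args x)) = snd (prod_decode (lit_args x)) \<longleftrightarrow> lit_sign x = 1)) \<or>
     (lit_kind x \<noteq> 0 \<and> prod_encode (lit_kind x - 1, code_length (lit_args x)) \<in> arity_table ar
         \<and> (\<forall>j<code_length (lit_args x). code_nth (lit_args x) j \<in> U) \<and>
        (R (lit_kind x - 1) (lit_args x) \<longleftrightarrow> lit_sign x = 1)))"

lemma diagram_iff_diagram_pred:
  assumes RC: "\<And>i r. i < length ar \<Longrightarrow> code_length r = ar ! i
      \<Longrightarrow> (\<forall>j<code_length r. code_nth r j \<in> fst C) \<Longrightarrow>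
     (snd C i (list_decode r) \<longleftrightarrow> R i r)"
  shows "x \<in> diagram ar C \<longleftrightarrow> diagram_pred ar (fst C) R x"
proof
  assume "x \<in> diagram ar C"
  then obtain p at where x: "x = lit_code p at" and wf: "atom_wf ar (fst C) at" and h:
      "holds C at \<longleftrightarrow> p"
    unfolding diagram_def by blast
  show "diagram_pred ar (fst C) R x"
  proof (cases at)
    case (AEq a b)
    then show ?thesis using x wf h unfolding diagram_pred_def by (auto simp: lit_parts)
  next
    case (ARel i xs)
    have l: "\<forall>j<code_length (list_encode xs). code_nth (list_encode xs) j \<in> fst C"
      using wf ARel by (auto intro!: subsetD[of "set xs" "fst C"] nth_mem)
    then have "snd C i xs \<longleftrightarrow> R i (list_encode xs)" using RC[of i "list_encode xs"] wf ARel by simp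
    then show ?thesis using x wf h l ARel unfolding diagram_pred_def
      by (auto simp: lit_parts arity_table_iff)
  qed
next
  assume d: "diagram_pred ar (fst C) R x"
  define p where "p = (lit_sign x = 1)"
  have lbx: "lit_sign x = (if p then 1 else 0)" using d unfolding diagram_pred_def p_def by auto
  show "x \<in> diagram ar C"
  proof (cases "lit_kind x = 0")
    case True
    define at where "at = AEq (fst (prod_decode (lit_args x))) (snd (prod_decode (lit_args x)))"
    have "x = lit_code p at"
      by (subst lit_parts_collapse) (simp add: lit_code_def at_def lbx True)
    moreover have "atom_wf ar (fst C) at" "holds C at \<longleftrightarrow> p"
      using d True unfolding diagram_pred_def at_def p_def by auto
    ultimately show ?thesis unfolding diagram_def by blast
  next
    case False
    define at where "at = ARel (lit_kind x - 1) (list_decode (lit_args x))"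
    have "x = lit_code p at"
      using False by (subst lit_parts_collapse) (simp add: lit_code_def at_def lbx)
    moreover have ar: "lit_kind x - 1 < length ar"
        "code_length (lit_args x) = ar ! (lit_kind x - 1)"
        "\<forall>j<code_length (lit_args x). code_nth (lit_args x) j \<in> fst C"
      using d False unfolding diagram_pred_def by (auto simp: arity_table_iff)
    moreover have "atom_wf ar (fst C) at"
      using ar unfolding at_def by (auto simp: code_length_def code_nth_def in_set_conv_nth)
    moreover have "holds C at \<longleftrightarrow> p"
      using d False RC[OF ar] unfolding diagram_pred_def at_def p_def by auto
    ultimately show ?thesis unfolding diagram_def by blast
  qed
qed

lemma decidable_diagram_family:
  assumes U: "decidable (\<lambda>q. Um (fst (prod_decode q)) (snd (prod_decode q)))"
  and R: "decidable (\<lambda>q. Rc (fst (prod_decode q)) (fst (prod_decode (snd (prod_decode q))))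
      (snd (prod_decode (snd (prod_decode q)))))"
  and UC: "\<And>n u. u \<in> fst (C n) \<longleftrightarrow> Um n u"
  and RC: "\<And>n i r. i < length ar \<Longrightarrow> code_length r = ar ! i
      \<Longrightarrow> (\<forall>j<code_length r. code_nth r j \<in> fst (C n)) \<Longrightarrow>
     (snd (C n) i (list_decode r) \<longleftrightarrow> Rc n i r)"
  shows "decidable (\<lambda>q. snd (prod_decode q) \<in> diagram ar (C (fst (prod_decode q))))"
proof -
  have U': "decidable (\<lambda>q. Um (f q) (g q))" if "computable f" "computable g" for f g
    using decidable_comp[OF U computable_pair[OF that]] by simp
  have R': "decidable (\<lambda>q. Rc (f q) (g q) (h q))" if "computable f" "computable g"
      "computable h" for f g h
    using decidable_comp[OF R computable_pair[OF that(1) computable_pair[OF that(2,3)]]] by simp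
  have F: "decidable (\<lambda>q. f q \<in> arity_table ar)" if "computable f" for f
    by (rule decidable_fin[OF finite_arity_table that])
  have e: "snd (prod_decode q) \<in> diagram ar (C (fst (prod_decode q))) \<longleftrightarrow>
     diagram_pred ar (fst (C (fst (prod_decode q)))) (Rc (fst (prod_decode q)))
         (snd (prod_decode q))" for q
    by (rule diagram_iff_diagram_pred) (rule RC)
  have "decidable (\<lambda>q. diagram_pred ar {u. Um (fst (prod_decode q)) u} (Rc (fst (prod_decode q)))
      (snd (prod_decode q)))"
    unfolding diagram_pred_def mem_Collect_eq
    by (intro computable_code_intros U' R' F computable_lit_sign computable_lit_kind
        computable_lit_args)
  then show ?thesis
  proof (rule decidable_ext)
    fix q
    have "fst (C n) = {u. Um n u}" for n using UC by auto
    then show "diagram_pred ar {u. Um (fst (prod_decode q)) u} (Rc (fst (prod_decode q)))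
        (snd (prod_decode q)) =
      (snd (prod_decode q) \<in> diagram ar (C (fst (prod_decode q))))" by (simp add: e)
  qed
qed

lemma atom_code_inj: "atom_code a = atom_code b \<Longrightarrow> a = b"
  by (cases a; cases b) (auto simp: list_encode_eq)

lemma lit_code_inj: "lit_code p a = lit_code q b \<longleftrightarrow> p = q \<and> a = b"
proof
  assume "lit_code p a = lit_code q b"
  then have "(if p then 1 else 0::nat) = (if q then 1 else 0) \<and> atom_code a = atom_code b"
    unfolding lit_code_def by simp
  then show "p = q \<and> a = b" using atom_code_inj by (auto split: if_splits)
qed simp

lemma lit_in_diagram: "lit_code p at \<in> diagram ar B \<longleftrightarrow> atom_wf ar (fst B) at \<and> (holds B at \<longleftrightarrow> p)"
proof
  assume "lit_code p at \<in> diagram ar B"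
  then obtain q b where "lit_code p at = lit_code q b" "atom_wf ar (fst B) b" "holds B b \<longleftrightarrow> q"
    unfolding diagram_def by blast
  then show "atom_wf ar (fst B) at \<and> (holds B at \<longleftrightarrow> p)" by (simp add: lit_code_inj)
next
  assume "atom_wf ar (fst B) at \<and> (holds B at \<longleftrightarrow> p)"
  then show "lit_code p at \<in> diagram ar B" unfolding diagram_def by blast
qed

definition eq_lit :: "nat \<Rightarrow> nat" where "eq_lit x = lit_code True (AEq x x)"

lemma computable_eq_lit: "computable f \<Longrightarrow> computable (\<lambda>x. eq_lit (f x))"
  unfolding eq_lit_def lit_code_def atom_code.simps by (intro computable_intros)

lemma eq_lit_in_diagram: "eq_lit x \<in> diagram ar B \<longleftrightarrow> x \<in> fst B"
  by (simp add: eq_lit_def lit_in_diagram)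

lemma rel_lit_in_diagram: "lit_code p (ARel i xs) \<in> diagram ar B \<longleftrightarrow>
   i < length ar \<and> length xs = ar ! i \<and> set xs \<subseteq> fst B \<and> (snd B i xs \<longleftrightarrow> p)"
  by (simp add: lit_in_diagram)

lemma is_index_phi_eq_1: "is_index ar a B \<Longrightarrow> phi a x = Some 1 \<longleftrightarrow> x \<in> diagram ar B"
  unfolding is_index_def by simp

lemma diagram_eq_univ: "diagram ar B = diagram ar B' \<Longrightarrow> fst B = fst B'"
  using eq_lit_in_diagram by blast

lemma diagram_eq_rel: "diagram ar B = diagram ar B' \<Longrightarrow> i < length ar \<Longrightarrow> length xs = ar ! i \<Longrightarrow>
   set xs \<subseteq> fst B \<Longrightarrow> snd B i xs = snd B' i xs"
  using rel_lit_in_diagram[of True i xs ar B] rel_lit_in_diagram[of True i xs ar B']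
      diagram_eq_univ[of ar B B'] by auto

lemma iso_diagram: 
  assumes "diagram ar B = diagram ar B'" "iso ar B A" shows "iso ar B' A"
proof -
  obtain h where h: "bij_betw h (fst B) (fst A)" and r:
      "\<forall>i < length ar. \<forall>xs. length xs = ar ! i \<and> set xs \<subseteq> fst B \<longrightarrow>
        (snd B i xs \<longleftrightarrow> snd A i (map h xs))"
    using assms(2) unfolding iso_def by blast
  have u: "fst B = fst B'" using diagram_eq_univ[OF assms(1)] .
  show ?thesis unfolding iso_def
  proof (intro exI conjI allI impI)
    show "bij_betw h (fst B') (fst A)" using h u by simp
    fix i xs assume "i < length ar" "length xs = ar ! i \<and> set xs \<subseteq> fst B'"
    then show "snd B' i xs \<longleftrightarrow> snd A i (map h xs)"
      using r diagram_eq_rel[OF assms(1), of i xs] u by auto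
  qed
qed

lemma is_index_diagram: assumes "is_index ar a B" "is_index ar a B'" shows
    "diagram ar B = diagram ar B'"
proof -
  have "x \<in> diagram ar B \<longleftrightarrow> x \<in> diagram ar B'" for x
    using is_index_phi_eq_1[OF assms(1), of x] is_index_phi_eq_1[OF assms(2), of x] by simp
  then show ?thesis by blast
qed

lemma index_set_iff_iso: "is_index ar a B \<Longrightarrow> a \<in> index_set ar A \<longleftrightarrow> iso ar B A"
  unfolding index_set_def using iso_diagram is_index_diagram by blast

lemma index_set_finI: "is_index ar a B \<Longrightarrow> finite (fst B) \<Longrightarrow> a \<in> index_set_fin ar"
  unfolding index_set_fin_def by blast

lemma sigma1_vimage:
  assumes "sigma1 S" "computable h"
  shows "sigma1 {x. h x \<in> S}"
proof -
  obtain P where P: "decidable (\<lambda>p. P (fst (prod_decode p)) (snd (prod_decode p)))" and S: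
      "S = {x. \<exists>w. P w x}"
    using assms(1) unfolding sigma1_def by blast
  have "decidable (\<lambda>p. P (fst (prod_decode p)) (h (snd (prod_decode p))))"
    using decidable_comp[OF P computable_pair[OF computable_fst[OF computable_id]
        computable_comp[OF assms(2) computable_snd[OF computable_id]]]]
    by simp
  then show ?thesis using sigma1I[of "\<lambda>w x. P w (h x)"] S by simp
qed

lemma sigma1_phi_eq_1:
  assumes "computable F"
  shows "sigma1 {q. phi (fst (prod_decode q)) (F (snd (prod_decode q))) = Some 1}"
proof -
  have "decidable (\<lambda>p. kleene_T_val (fst (prod_decode (snd (prod_decode p))))
      (F (snd (prod_decode (snd (prod_decode p))))) 1 (fst (prod_decode p)))"
    by (intro decidable_kleene_T_val computable_intros computable_comp[OF assms])
  then have "sigma1 {q. \<exists>w. kleene_T_val (fst (prod_decode q)) (F (snd (prod_decode q))) 1 w}"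
    by (rule sigma1I)
  then show ?thesis by (simp add: phi_Some_kleene_T_val)
qed

lemma sigma1_phi_eq_1_at: "sigma1 {a. phi a x = Some 1}"
  using sigma1_vimage[OF sigma1_phi_eq_1[OF computable_const[of x]] computable_pair[OF computable_id
      computable_const[of 0]]]
  by simp

lemma sigma1_phi_eq_lit: "sigma1 {a. \<exists>x. phi a (eq_lit x) = Some 1}"
  using sigma1_proj[OF sigma1_phi_eq_1[OF computable_eq_lit[OF computable_id]]] by simp

lemma ce_ex_list:
  assumes "sigma1 {q. P (fst (prod_decode q)) (list_decode (snd (prod_decode q)))}"
  shows "ce {a. \<exists>ys. P a ys}"
proof -
  have "{a. \<exists>ys. P a ys} = {a. \<exists>c. prod_encode (a, c) \<in> {q. P (fst (prod_decode q))
      (list_decode (snd (prod_decode q)))}}"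
    by (auto intro: exI[of _ "list_encode _"])
  then show ?thesis using sigma1_imp_ce[OF sigma1_proj[OF assms]] by simp
qed

section \<open>Reductions by pullback structures\<close>

definition least_trace :: "nat \<Rightarrow> nat \<Rightarrow> nat \<Rightarrow> bool" where
  "least_trace e n w \<longleftrightarrow> kleene_T e n w \<and> (\<forall>v<w. \<not> kleene_T e n v)"

lemma least_trace_iff: "least_trace e n w \<longleftrightarrow> (\<exists>v. kleene_T e n v) \<and> w = (LEAST v. kleene_T e n v)"
proof
  assume "least_trace e n w"
  then have "kleene_T e n w" "\<forall>v<w. \<not> kleene_T e n v" unfolding least_trace_def by auto
  then show "(\<exists>v. kleene_T e n v) \<and> w = (LEAST v. kleene_T e n v)"
    by (metis (no_types, lifting) Least_equality not_less)
next
  assume "(\<exists>v. kleene_T e n v) \<and> w = (LEAST v. kleene_T e n v)"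
  then show "least_trace e n w" unfolding least_trace_def by (metis LeastI not_less_Least)
qed

lemma decidable_least_trace:
  assumes "computable e" "computable n" "computable w"
  shows "decidable (\<lambda>q. least_trace (e q) (n q) (w q))"
proof -
  have "decidable (\<lambda>q. least_trace (fst (prod_decode q)) (fst (prod_decode (snd (prod_decode q))))
      (snd (prod_decode (snd (prod_decode q)))))"
    unfolding least_trace_def by (intro computable_intros decidable_kleene_T)
  from decidable_comp[OF this computable_pair[OF assms(1) computable_pair[OF assms(2,3)]]]
  show ?thesis by simp
qed

lemma iso_card: "iso ar B A \<Longrightarrow> card (fst B) = card (fst A)"
  unfolding iso_def using bij_betw_same_card by blast

definition pullback_struc :: "nat set \<Rightarrow> (nat \<Rightarrow> nat) \<Rightarrow> struc \<Rightarrow> struc" where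
  "pullback_struc U g A = (U, \<lambda>i xs. set (map g xs) \<subseteq> fst A \<and> snd A i (map g xs))"

lemma iso_pullback_struc:
  assumes "bij_betw g U (fst A)"
  shows "iso ar (pullback_struc U g A) A"
  unfolding iso_def
proof (intro exI[of _ g] conjI allI impI)
  show "bij_betw g (fst (pullback_struc U g A)) (fst A)"
    using assms by (simp add: pullback_struc_def)
  fix i xs assume "length xs = ar ! i \<and> set xs \<subseteq> fst (pullback_struc U g A)"
  then have "set (map g xs) \<subseteq> fst A" using assms unfolding bij_betw_def pullback_struc_def by auto
  then show "snd (pullback_struc U g A) i xs = snd A i (map g xs)" by (simp add: pullback_struc_def)
qed

definition rel_table :: "nat list \<Rightarrow> struc \<Rightarrow> nat set" where
  "rel_table ar A = (\<Union>i<length ar. (\<lambda>ys. prod_encode (i, list_encode ys)) `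
     {ys. set ys \<subseteq> fst A \<and> length ys = ar ! i \<and> snd A i ys})"

lemma finite_rel_table: "finite (fst A) \<Longrightarrow> finite (rel_table ar A)"
  unfolding rel_table_def
  by (intro finite_UN_I finite_lessThan finite_imageI finite_subset[OF _ finite_lists_length_eq]) auto

lemma pullback_struc_rel_iff:
  assumes "i < length ar" "code_length r = ar ! i"
  shows "snd (pullback_struc U g A) i (list_decode r) \<longleftrightarrow>
    (\<exists>c\<in>rel_table ar A. fst (prod_decode c) = i \<and> code_length (snd (prod_decode c)) = code_length r \<and>
      (\<forall>j<code_length r. g (code_nth r j) = code_nth (snd (prod_decode c)) j))"
    (is "_ \<longleftrightarrow> (\<exists>c\<in>_. ?R c)")
proof
  assume "snd (pullback_struc U g A) i (list_decode r)"
  then have "map g (list_decode r) \<in> {ys. set ys \<subseteq> fst A \<and> length ys = ar ! i \<and> snd A i ys}"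
    using assms(2) by (simp add: pullback_struc_def code_length_def)
  then have "prod_encode (i, list_encode (map g (list_decode r))) \<in> rel_table ar A"
    unfolding rel_table_def using assms(1) by blast
  moreover have "?R (prod_encode (i, list_encode (map g (list_decode r))))"
    by (auto simp: code_length_def code_nth_def)
  ultimately show "\<exists>c\<in>rel_table ar A. ?R c" by blast
next
  assume "\<exists>c\<in>rel_table ar A. ?R c"
  then obtain i' ys where ys: "set ys \<subseteq> fst A" "snd A i' ys" and R: "?R (prod_encode (i', list_encode ys))"
    unfolding rel_table_def by blast
  then have m: "map g (list_decode r) = ys"
    by (intro nth_equalityI) (auto simp: code_length_def code_nth_def)
  show "snd (pullback_struc U g A) i (list_decode r)"
    unfolding pullback_struc_def snd_conv m using ys R by simp
qed

lemma decidable_pullback_diagram: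
  assumes fin: "finite (fst A)" and g: "computable g"
    and U: "decidable (\<lambda>q. U (fst (prod_decode q)) (snd (prod_decode q)))"
  shows "decidable (\<lambda>q. snd (prod_decode q) \<in> diagram ar
      (pullback_struc {u. U (fst (prod_decode q)) u} g A))"
proof (rule decidable_diagram_family[OF U])
  show "decidable (\<lambda>q. (\<lambda>n i r. \<exists>c\<in>rel_table ar A. fst (prod_decode c) = i \<and>
      code_length (snd (prod_decode c)) = code_length r \<and>
      (\<forall>j<code_length r. g (code_nth r j) = code_nth (snd (prod_decode c)) j))
    (fst (prod_decode q)) (fst (prod_decode (snd (prod_decode q)))) (snd (prod_decode (snd (prod_decode q)))))"
    by (intro decidable_bex_fin[OF finite_rel_table[OF fin]]) (intro computable_code_intros computable_comp[OF g])
qed (simp add: pullback_struc_def, metis pullback_struc_rel_iff)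

lemma index_set_reduction:
  assumes "finite (fst A)" "computable g"
      "decidable (\<lambda>q. U (fst (prod_decode q)) (snd (prod_decode q)))"
    and "\<And>n. finite {u. U n u}"
    and "\<And>n. n \<in> S \<longleftrightarrow> iso ar (pullback_struc {u. U n u} g A) A"
  shows "\<exists>f. total_computable f \<and> (\<forall>n. f n \<in> index_set_fin ar) \<and> (\<forall>n. n \<in> S \<longleftrightarrow> f n \<in> index_set ar A)"
proof -
  let ?C = "\<lambda>n. pullback_struc {u. U n u} g A"
  obtain f where f: "total_computable f"
    and fphi: "\<forall>n x. phi (f n) x = Some (if x \<in> diagram ar (?C n) then 1 else 0)"
    using smn[of "\<lambda>n x. if x \<in> diagram ar (?C n) then 1 else 0"]
      decidable_pullback_diagram[OF assms(1-3)]
    unfolding decidable_def by auto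
  have ix: "is_index ar (f n) (?C n)" for n using fphi unfolding is_index_def by simp
  have "f n \<in> index_set_fin ar" for n using index_set_finI[OF ix] assms(4)
    by (simp add: pullback_struc_def)
  moreover have "n \<in> S \<longleftrightarrow> f n \<in> index_set ar A" for n using index_set_iff_iso[OF ix, of n A] assms(5)
    by simp
  ultimately show ?thesis using f by blast
qed

section \<open>The empty structure\<close>

lemma iso_empty_iff:
  assumes "fst A = {}"
  shows "iso ar B A \<longleftrightarrow> fst B = {} \<and> (\<forall>i<length ar. ar ! i = 0 \<longrightarrow> snd B i [] = snd A i [])"
proof
  assume "iso ar B A"
  then obtain h where h: "bij_betw h (fst B) (fst A)" and r:
      "\<forall>i < length ar. \<forall>xs. length xs = ar ! i \<and> set xs \<subseteq> fst B \<longrightarrow>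
        (snd B i xs \<longleftrightarrow> snd A i (map h xs))"
    unfolding iso_def by blast
  then show "fst B = {} \<and> (\<forall>i<length ar. ar ! i = 0 \<longrightarrow> snd B i [] = snd A i [])"
    using assms by (auto simp: bij_betw_def)
next
  assume "fst B = {} \<and> (\<forall>i<length ar. ar ! i = 0 \<longrightarrow> snd B i [] = snd A i [])"
  then show "iso ar B A" unfolding iso_def using assms by (intro exI[of _ id]) auto
qed

lemma index_set_empty_within:
  assumes A0: "fst A = {}"
  shows "within Pi01 (index_set ar A) (index_set_fin ar)"
proof -
  define N where "N = {a. \<exists>x. phi a (eq_lit x) = Some 1} \<union>
    (\<Union>i\<in>{i. i < length ar \<and> ar ! i = 0}. {a. phi a (lit_code (\<not> snd A i []) (ARel i [])) = Some 1})"
  have "sigma1 N" unfolding N_def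
    by (intro sigma1_Un sigma1_phi_eq_lit sigma1_UN sigma1_phi_eq_1_at) simp
  then have "- N \<in> Pi01" unfolding Pi01_def by (simp add: sigma1_imp_ce)
  moreover have N: "a \<notin> N \<longleftrightarrow> iso ar B A" if ix: "is_index ar a B" for a B
    unfolding N_def iso_empty_iff[OF A0] using is_index_phi_eq_1[OF ix]
    by (auto simp: eq_lit_in_diagram rel_lit_in_diagram)
  have "index_set ar A = - N \<inter> index_set_fin ar"
  proof (intro set_eqI iffI)
    fix a assume "a \<in> index_set ar A"
    then obtain B where iso: "iso ar B A" and ix: "is_index ar a B" unfolding index_set_def by blast
    then have "fst B = {}" using iso_empty_iff[OF A0] by blast
    then show "a \<in> - N \<inter> index_set_fin ar" using N[OF ix] iso index_set_finI[OF ix] by simp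
  next
    fix a assume a: "a \<in> - N \<inter> index_set_fin ar"
    then obtain B where ix: "is_index ar a B" unfolding index_set_fin_def by blast
    then show "a \<in> index_set ar A" using a N[OF ix] index_set_iff_iso[OF ix] by simp
  qed
  ultimately show ?thesis unfolding within_def by blast
qed

lemma index_set_empty_hard:
  assumes A0: "fst A = {}" and S: "S \<in> Pi01"
  shows "\<exists>f. total_computable f \<and> (\<forall>n. f n \<in> index_set_fin ar) \<and> (\<forall>n. n \<in> S \<longleftrightarrow> f n \<in> index_set ar A)"
proof -
  obtain e where e: "- S = {n. phi e n \<noteq> None}" using S unfolding Pi01_def ce_def by blast
  show ?thesis
  proof (rule index_set_reduction[where U = "least_trace e" and g = "\<lambda>u. 0"])
    show "finite (fst A)" using A0 by simp
    show "computable (\<lambda>u. 0)" by (rule computable_const)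
    show "decidable (\<lambda>q. least_trace e (fst (prod_decode q)) (snd (prod_decode q)))"
      by (intro decidable_least_trace computable_intros)
    show "finite {u. least_trace e n u}" for n
      by (rule finite_subset[of _ "{LEAST v. kleene_T e n v}"]) (auto simp: least_trace_iff)
    show "n \<in> S \<longleftrightarrow> iso ar (pullback_struc {u. least_trace e n u} (\<lambda>u. 0) A) A" for n
    proof -
      have "iso ar (pullback_struc {u. least_trace e n u} (\<lambda>u. 0) A) A \<longleftrightarrow> \<not> (\<exists>w. kleene_T e n w)"
        unfolding iso_empty_iff[OF A0] by (auto simp: pullback_struc_def least_trace_iff)
      then show ?thesis using e halts_iff_kleene_T by blast
    qed
  qed
qed

section \<open>Nonempty structures\<close>

lemma set_map_nth_subset: "set zs \<subseteq> {..<length ys} \<Longrightarrow> set ys \<subseteq> U \<Longrightarrow> set (map ((!) ys) zs) \<subseteq> U"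
  using nth_mem by fastforce

lemma card_ge_iff_distinct_list:
  assumes "finite U"
  shows "m \<le> card U \<longleftrightarrow> (\<exists>ys. length ys = m \<and> distinct ys \<and> set ys \<subseteq> U)"
proof
  assume c: "m \<le> card U"
  obtain xs where xs: "set xs = U" "distinct xs" using finite_distinct_list[OF assms] by blast
  have "length (take m xs) = m" "distinct (take m xs)" "set (take m xs) \<subseteq> U"
    using c xs distinct_card[OF xs(2)] by (auto dest: in_set_takeD)
  then show "\<exists>ys. length ys = m \<and> distinct ys \<and> set ys \<subseteq> U" by blast
next
  assume "\<exists>ys. length ys = m \<and> distinct ys \<and> set ys \<subseteq> U"
  then show "m \<le> card U" using card_mono[OF assms] distinct_card by metis
qed

definition index_tuples :: "nat list \<Rightarrow> nat \<Rightarrow> (nat \<times> nat list) set" where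
  "index_tuples ar k = {(i, zs). i < length ar \<and> set zs \<subseteq> {..<k} \<and> length zs = ar ! i}"

lemma finite_index_tuples: "finite (index_tuples ar k)"
proof -
  have "index_tuples ar k =
      (\<Union>i<length ar. (\<lambda>zs. (i, zs)) ` {zs. set zs \<subseteq> {..<k} \<and> length zs = ar ! i})"
    unfolding index_tuples_def by auto
  then show ?thesis by (simp add: finite_lists_length_eq)
qed

text \<open>The map sending as ! j to ys ! j is an embedding of A into B (as enumerates A).\<close>

definition embeds_via :: "nat list \<Rightarrow> struc \<Rightarrow> nat list \<Rightarrow> struc \<Rightarrow> nat list \<Rightarrow> bool" where
  "embeds_via ar A as B ys \<longleftrightarrow> length ys = length as \<and> distinct ys \<and> set ys \<subseteq> fst B \<and>
     (\<forall>(i, zs)\<in>index_tuples ar (length as). snd B i (map ((!) ys) zs) \<longleftrightarrow> snd A i (map ((!) as) zs))"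

lemma iso_imp_embeds_via:
  assumes as: "distinct as" "set as = fst A" and iso: "iso ar B A"
  shows "\<exists>ys. embeds_via ar A as B ys"
proof -
  obtain h where h: "bij_betw h (fst B) (fst A)" and r:
      "\<forall>i < length ar. \<forall>xs. length xs = ar ! i \<and> set xs \<subseteq> fst B \<longrightarrow>
        (snd B i xs \<longleftrightarrow> snd A i (map h xs))"
    using iso unfolding iso_def by blast
  define ys where "ys = map (inv_into (fst B) h) as"
  have hinv: "bij_betw (inv_into (fst B) h) (fst A) (fst B)" by (rule bij_betw_inv_into[OF h])
  have ysB: "set ys \<subseteq> fst B" unfolding ys_def using as hinv by (auto simp: bij_betw_def)
  have h_ys: "map h (map ((!) ys) zs) = map ((!) as) zs" if "set zs \<subseteq> {..<length as}" for zs
  proof -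
    have "h (ys ! j) = as ! j" if "j < length as" for j
      using that as h nth_mem[OF that] unfolding ys_def bij_betw_def by (simp add: f_inv_into_f)
    then show ?thesis using that by auto
  qed
  have "embeds_via ar A as B ys" unfolding embeds_via_def index_tuples_def
  proof (intro conjI ballI)
    show "length ys = length as" unfolding ys_def by simp
    show "distinct ys" unfolding ys_def using as hinv by (simp add: distinct_map bij_betw_def)
    show "set ys \<subseteq> fst B" by (rule ysB)
    fix p assume "p \<in> {(i, zs). i < length ar \<and> set zs \<subseteq> {..<length as} \<and> length zs = ar ! i}"
    then obtain i zs where p: "p = (i, zs)" "i < length ar" "set zs \<subseteq> {..<length as}"
        "length zs = ar ! i"
      by blast
    have "set (map ((!) ys) zs) \<subseteq> fst B"
      using set_map_nth_subset[of zs ys "fst B"] p(3) ysB by (simp add: ys_def)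
    then have "snd B i (map ((!) ys) zs) \<longleftrightarrow> snd A i (map h (map ((!) ys) zs))"
      using r p(2,4) by simp
    then show "case p of (i, zs) \<Rightarrow> snd B i (map ((!) ys) zs) = snd A i (map ((!) as) zs)"
      unfolding p(1) h_ys[OF p(3)] by simp
  qed
  then show ?thesis by blast
qed

lemma embeds_via_imp_iso:
  assumes as: "distinct as" "set as = fst A" and emb: "embeds_via ar A as B ys"
    and finB: "finite (fst B)" and c: "card (fst B) \<le> length as"
  shows "iso ar B A"
proof -
  let ?k = "length as"
  have ys: "length ys = ?k" "distinct ys" "set ys \<subseteq> fst B" using emb unfolding embeds_via_def
    by auto
  have "set ys = fst B"
    using card_seteq[OF finB ys(3)] c distinct_card[OF ys(2)] ys(1) by simp
  then have bys: "bij_betw ((!) ys) {..<?k} (fst B)" using bij_betw_nth[OF ys(2)] ys(1) by simp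
  have ba: "bij_betw ((!) as) {..<?k} (fst A)" using bij_betw_nth[OF as(1)] as by simp
  define iv where "iv = inv_into {..<?k} ((!) ys)"
  have biv: "bij_betw iv (fst B) {..<?k}" unfolding iv_def by (rule bij_betw_inv_into[OF bys])
  have ys_iv: "ys ! (iv x) = x" if "x \<in> fst B" for x
    using that bys unfolding iv_def bij_betw_def by (simp add: f_inv_into_f)
  show ?thesis unfolding iso_def
  proof (intro exI[of _ "\<lambda>x. as ! iv x"] conjI allI impI)
    show "bij_betw (\<lambda>x. as ! iv x) (fst B) (fst A)"
      using bij_betw_trans[OF biv ba] by (simp add: comp_def)
    fix i xs assume ix: "i < length ar" "length xs = ar ! i \<and> set xs \<subseteq> fst B"
    have "(i, map iv xs) \<in> index_tuples ar ?k"
      using biv ix unfolding index_tuples_def bij_betw_def by auto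
    then have "snd B i (map ((!) ys) (map iv xs)) \<longleftrightarrow> snd A i (map ((!) as) (map iv xs))"
      using emb unfolding embeds_via_def by blast
    moreover have "map ((!) ys) (map iv xs) = xs"
      unfolding map_map by (rule map_idI) (use ys_iv ix in auto)
    ultimately show "snd B i xs \<longleftrightarrow> snd A i (map (\<lambda>x. as ! iv x) xs)"
      by (simp add: comp_def)
  qed
qed

definition declares_distinct :: "nat \<Rightarrow> nat \<Rightarrow> nat list \<Rightarrow> bool" where
  "declares_distinct a m ys \<longleftrightarrow> length ys = m \<and> distinct ys \<and> (\<forall>y\<in>set ys. phi a (eq_lit y) = Some 1)"

definition declares_copy :: "nat list \<Rightarrow> struc \<Rightarrow> nat list \<Rightarrow> nat \<Rightarrow> nat list \<Rightarrow> bool" where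
  "declares_copy ar A as a ys \<longleftrightarrow> declares_distinct a (length as) ys \<and>
     (\<forall>(i, zs)\<in>index_tuples ar (length as).
        phi a (lit_code (snd A i (map ((!) as) zs)) (ARel i (map ((!) ys) zs))) = Some 1)"

lemma declares_distinct_iff:
  assumes "is_index ar a B"
  shows "declares_distinct a m ys \<longleftrightarrow> length ys = m \<and> distinct ys \<and> set ys \<subseteq> fst B"
  unfolding declares_distinct_def is_index_phi_eq_1[OF assms] eq_lit_in_diagram by auto

lemma declares_copy_iff:
  assumes ix: "is_index ar a B"
  shows "declares_copy ar A as a ys \<longleftrightarrow> embeds_via ar A as B ys"
proof -
  have "set (map ((!) ys) zs) \<subseteq> fst B"
    if "set ys \<subseteq> fst B" "length ys = length as" "(i, zs) \<in> index_tuples ar (length as)" for i zs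
    using that set_map_nth_subset[of zs ys "fst B"] by (auto simp: index_tuples_def)
  then show ?thesis
    unfolding declares_copy_def embeds_via_def declares_distinct_iff[OF ix] is_index_phi_eq_1[OF ix]
    by (auto simp: rel_lit_in_diagram index_tuples_def)
qed

definition distinct_code :: "nat \<Rightarrow> nat \<Rightarrow> bool" where
  "distinct_code c m \<longleftrightarrow> code_length c = m \<and> (\<forall>j<m. \<forall>l<j. code_nth c j \<noteq> code_nth c l)"

lemma distinct_code_iff: "distinct_code c m \<longleftrightarrow> length (list_decode c) = m \<and> distinct (list_decode c)"
  unfolding distinct_code_def code_length_def code_nth_def distinct_conv_nth
  by (auto simp: nat_neq_iff) (metis less_trans)+

lemma sigma1_declares_distinct:
  "sigma1 {q. declares_distinct (fst (prod_decode q)) m (list_decode (snd (prod_decode q)))}"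
proof -
  have "{q. declares_distinct (fst (prod_decode q)) m (list_decode (snd (prod_decode q)))} =
      {q. distinct_code (snd (prod_decode q)) m} \<inter>
      (\<Inter>j<m. {q. phi (fst (prod_decode q)) (eq_lit (code_nth (snd (prod_decode q)) j)) = Some 1})"
    by (auto simp: declares_distinct_def distinct_code_iff code_nth_def code_length_def
        in_set_conv_nth)
      (metis nth_mem)
  moreover have "sigma1 {q. distinct_code (snd (prod_decode q)) m}"
    unfolding distinct_code_def by (intro sigma1_decidable computable_code_intros)
  moreover have "sigma1 (\<Inter>j<m. {q. phi (fst (prod_decode q))
      (eq_lit (code_nth (snd (prod_decode q)) j)) = Some 1})"
    by (intro sigma1_INT sigma1_phi_eq_1 computable_eq_lit computable_code_intros) simp
  ultimately show ?thesis using sigma1_Int by simp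
qed

lemma computable_list_encode_map:
    "computable f \<Longrightarrow> computable (\<lambda>x. list_encode (map (code_nth (f x)) zs))"
  by (induction zs) (simp_all add: computable_const computable_Suc computable_pair
      computable_code_nth)

lemma map_code_nth: "set zs \<subseteq> {..<length (list_decode c)}
    \<Longrightarrow> map (code_nth c) zs = map ((!) (list_decode c)) zs"
  by (auto simp: code_nth_def code_length_def)

lemma sigma1_declares_copy:
  "sigma1 {q. declares_copy ar A as (fst (prod_decode q)) (list_decode (snd (prod_decode q)))}"
proof -
  let ?lit = "\<lambda>i zs c. lit_code (snd A i (map ((!) as) zs)) (ARel i (map (code_nth c) zs))"
  have "{q. declares_copy ar A as (fst (prod_decode q)) (list_decode (snd (prod_decode q)))} =
      {q. declares_distinct (fst (prod_decode q)) (length as) (list_decode (snd (prod_decode q)))} \<inter>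
      (\<Inter>(i, zs)\<in>index_tuples ar (length as). {q. phi (fst (prod_decode q))
          (?lit i zs (snd (prod_decode q))) = Some 1})"
    by (auto simp: declares_copy_def declares_distinct_def index_tuples_def map_code_nth)
  moreover have "sigma1 {q. phi (fst (prod_decode q)) (?lit i zs (snd (prod_decode q))) = Some 1}"
    for i zs
    by (rule sigma1_phi_eq_1)
        (unfold lit_code_def atom_code.simps, intro computable_intros computable_list_encode_map)
  ultimately show ?thesis
    by (simp add: sigma1_Int sigma1_INT finite_index_tuples sigma1_declares_distinct split_def)
qed

lemma index_set_within_dce:
  assumes fin: "finite (fst A)"
  shows "within dce (index_set ar A) (index_set_fin ar)"
proof -
  define as where "as = sorted_list_of_set (fst A)"
  have as: "distinct as" "set as = fst A" "length as = card (fst A)" using fin unfolding as_def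
    by auto
  define S1 where "S1 = {a. \<exists>ys. declares_copy ar A as a ys}"
  define S2 where "S2 = {a. \<exists>ys. declares_distinct a (Suc (card (fst A))) ys}"
  have S2: "a \<in> S2 \<longleftrightarrow> Suc (card (fst A)) \<le> card (fst B)" if "is_index ar a B"
      "finite (fst B)" for a B
  proof -
    have "a \<in> S2 \<longleftrightarrow> (\<exists>ys. length ys = Suc (card (fst A)) \<and> distinct ys \<and> set ys \<subseteq> fst B)"
      unfolding S2_def using declares_distinct_iff[OF that(1)] by blast
    then show ?thesis using card_ge_iff_distinct_list[OF that(2)] by simp
  qed
  have "index_set ar A = (S1 - S2) \<inter> index_set_fin ar"
  proof (intro set_eqI iffI)
    fix a assume "a \<in> index_set ar A"
    then obtain B where iso: "iso ar B A" and ix: "is_index ar a B" unfolding index_set_def by blast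
    have finB: "finite (fst B)" using iso fin unfolding iso_def by (metis bij_betw_finite)
    obtain ys where "embeds_via ar A as B ys" using iso_imp_embeds_via[OF as(1,2) iso] by blast
    then have "declares_copy ar A as a ys" using declares_copy_iff[OF ix] by blast
    then have "a \<in> S1" unfolding S1_def by blast
    moreover have "a \<notin> S2" using S2[OF ix finB] iso_card[OF iso] by simp
    ultimately show "a \<in> (S1 - S2) \<inter> index_set_fin ar" using index_set_finI[OF ix finB] by blast
  next
    fix a assume a: "a \<in> (S1 - S2) \<inter> index_set_fin ar"
    then obtain B where ix: "is_index ar a B" and finB:
        "finite (fst B)" unfolding index_set_fin_def by blast
    obtain ys where "declares_copy ar A as a ys" using a unfolding S1_def by blast
    moreover have "card (fst B) \<le> length as" using a S2[OF ix finB] as(3) by simp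
    ultimately have "iso ar B A" using embeds_via_imp_iso[OF as(1,2)] declares_copy_iff[OF ix] finB
      by blast
    then show "a \<in> index_set ar A" using index_set_iff_iso[OF ix] by simp
  qed
  moreover have "ce S1" "ce S2" unfolding S1_def S2_def
    by (rule ce_ex_list[OF sigma1_declares_copy], rule ce_ex_list[OF sigma1_declares_distinct])
  then have "S1 - S2 \<in> dce" unfolding dce_def by blast
  ultimately show ?thesis unfolding within_def by blast
qed

text \<open>The tag t of an element \<langle>t, a\<rangle> records the stage at which it appears, which makes
  membership decidable.\<close>

definition dce_universe :: "struc \<Rightarrow> nat \<Rightarrow> nat \<Rightarrow> nat \<Rightarrow> nat \<Rightarrow> bool" where
  "dce_universe A e1 e2 n u \<longleftrightarrow>
     (fst (prod_decode u) = 0 \<and> snd (prod_decode u) \<in> fst A - {Min (fst A)}) \<or>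
     (fst (prod_decode u) \<noteq> 0 \<and> snd (prod_decode u) = Min (fst A)
         \<and> least_trace e1 n (fst (prod_decode u) - 1)) \<or>
     (fst (prod_decode u) \<noteq> 0 \<and> snd (prod_decode u) = Suc (Max (fst A)) \<and>
        (\<exists>w\<le>fst (prod_decode u) - 1. least_trace e1 n w)
            \<and> (\<exists>w\<le>fst (prod_decode u) - 1. least_trace e2 n w) \<and>
        (least_trace e1 n (fst (prod_decode u) - 1) \<or> least_trace e2 n (fst (prod_decode u) - 1)))"

lemma dce_universe_eq:
  assumes fin: "finite (fst A)" and ne: "fst A \<noteq> {}"
  shows "{u. dce_universe A e1 e2 n u} = (\<lambda>a. prod_encode (0, a)) ` (fst A - {Min (fst A)})
    \<union> (if \<exists>w. kleene_T e1 n w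
        then {prod_encode (Suc (LEAST w. kleene_T e1 n w), Min (fst A))} else {})
    \<union> (if (\<exists>w. kleene_T e1 n w) \<and> (\<exists>w. kleene_T e2 n w)
        then {prod_encode (Suc (max (LEAST w. kleene_T e1 n w) (LEAST w. kleene_T e2 n w)),
          Suc (Max (fst A)))}
        else {})" (is "_ = ?U")
proof -
  have "Min (fst A) \<in> fst A" "Suc (Max (fst A)) \<notin> fst A"
    using Min_in[OF fin ne] Max_ge[OF fin] Suc_n_not_le_n by blast+
  then have "dce_universe A e1 e2 n (prod_encode (t, v)) \<longleftrightarrow> prod_encode (t, v) \<in> ?U" for t v
    unfolding dce_universe_def least_trace_iff by (cases t) (auto simp: max_def)
  then have "dce_universe A e1 e2 n u \<longleftrightarrow> u \<in> ?U" for u by (metis prod.collapse prod_decode_inverse)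
  then show ?thesis by blast
qed

lemma iso_dce_universe_iff:
  assumes fin: "finite (fst A)" and ne: "fst A \<noteq> {}"
  shows "iso ar (pullback_struc {u. dce_universe A e1 e2 n u} (\<lambda>u. snd (prod_decode u)) A) A \<longleftrightarrow>
    (\<exists>w. kleene_T e1 n w) \<and> \<not> (\<exists>w. kleene_T e2 n w)"
proof -
  let ?g = "\<lambda>u. snd (prod_decode u)" and ?a1 = "Min (fst A)"
  define base where "base = (\<lambda>a. prod_encode (0, a)) ` (fst A - {?a1})"
  define U where "U = {u. dce_universe A e1 e2 n u}"
  have a1: "?a1 \<in> fst A" and fresh: "Suc (Max (fst A)) \<notin> fst A"
    using Min_in[OF fin ne] Max_ge[OF fin] Suc_n_not_le_n by blast+
  have k_pos: "0 < card (fst A)" using fin ne by (simp add: card_gt_0_iff)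
  have card_base: "card base = card (fst A) - 1" and fin_base: "finite base"
    unfolding base_def using fin a1 by (simp_all add: card_image inj_on_def)
  have base_fst: "fst (prod_decode x) = 0" if "x \<in> base" for x using that unfolding base_def by auto
  have iso_card_U: "iso ar (pullback_struc U ?g A) A \<Longrightarrow> card U = card (fst A)"
    using iso_card by (fastforce simp: pullback_struc_def)
  consider (none) "\<not> (\<exists>w. kleene_T e1 n w)"
    | (first) "\<exists>w. kleene_T e1 n w" "\<not> (\<exists>w. kleene_T e2 n w)"
    | (both) "\<exists>w. kleene_T e1 n w" "\<exists>w. kleene_T e2 n w" by blast
  then show ?thesis
  proof cases
    case none
    have "U = base" unfolding U_def base_def dce_universe_eq[OF fin ne] using none by auto
    then have "card U \<noteq> card (fst A)" using card_base k_pos by simp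
    then show ?thesis using none iso_card_U unfolding U_def by blast
  next
    case first
    define x1 where "x1 = prod_encode (Suc (LEAST w. kleene_T e1 n w), ?a1)"
    have U: "U = insert x1 base" using first
      unfolding U_def base_def x1_def dce_universe_eq[OF fin ne] by auto
    have "?g ` base = fst A - {?a1}" unfolding base_def by force
    moreover have "inj_on ?g U" unfolding U base_def x1_def inj_on_def by auto
    ultimately have "bij_betw ?g U (fst A)" unfolding bij_betw_def U using a1 by (auto simp: x1_def)
    then show ?thesis using first iso_pullback_struc by (simp add: U_def)
  next
    case both
    define x1 where "x1 = prod_encode (Suc (LEAST w. kleene_T e1 n w), ?a1)"
    define x2 where "x2 = prod_encode
        (Suc (max (LEAST w. kleene_T e1 n w) (LEAST w. kleene_T e2 n w)), Suc (Max (fst A)))"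
    have "U = insert x2 (insert x1 base)"
      using both unfolding U_def base_def x1_def x2_def dce_universe_eq[OF fin ne] by auto
    moreover have "x1 \<notin> base" "x2 \<notin> base" "x2 \<noteq> x1"
      using base_fst a1 fresh unfolding x1_def x2_def by force+
    ultimately have "card U = card (fst A) + 1" using fin_base card_base k_pos by simp
    then show ?thesis using both iso_card_U unfolding U_def by auto
  qed
qed

lemma index_set_dce_hard:
  assumes fin: "finite (fst A)" and ne: "fst A \<noteq> {}" and S: "S \<in> dce"
  shows "\<exists>f. total_computable f \<and> (\<forall>n. f n \<in> index_set_fin ar) \<and> (\<forall>n. n \<in> S \<longleftrightarrow> f n \<in> index_set ar A)"
proof -
  obtain e1 e2 where S_eq: "S = {n. phi e1 n \<noteq> None} - {n. phi e2 n \<noteq> None}"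
    using S unfolding dce_def ce_def by blast
  show ?thesis
  proof (rule index_set_reduction[where U = "dce_universe A e1 e2" and g = "\<lambda>u. snd (prod_decode u)"])
    show "finite (fst A)" by (rule fin)
    show "computable (\<lambda>u. snd (prod_decode u))" by (intro computable_intros)
    show "decidable (\<lambda>q. dce_universe A e1 e2 (fst (prod_decode q)) (snd (prod_decode q)))"
      unfolding dce_universe_def
        by (intro computable_intros decidable_least_trace decidable_fin) (use fin in simp)
    show "finite {u. dce_universe A e1 e2 n u}" for n
      using fin by (simp add: dce_universe_eq[OF fin ne])
    show "n \<in> S \<longleftrightarrow> iso ar (pullback_struc {u. dce_universe A e1 e2 n u} (\<lambda>u. snd (prod_decode u)) A)
        A" for n
      unfolding iso_dce_universe_iff[OF fin ne] S_eq using halts_iff_kleene_T by blast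
  qed
qed

theorem theorem2p1:
  fixes ar :: "nat list" and A :: struc
  assumes "finite (fst A)"
  shows "(fst A = {} \<longrightarrow> m_complete_within Pi01 (index_set ar A) (index_set_fin ar))
       \<and> (card (fst A) \<ge> 1 \<longrightarrow> m_complete_within dce (index_set ar A) (index_set_fin ar))"
proof (intro conjI impI)
  assume "fst A = {}"
  then show "m_complete_within Pi01 (index_set ar A) (index_set_fin ar)"
    unfolding m_complete_within_def using index_set_empty_within index_set_empty_hard by blast
next
  assume "card (fst A) \<ge> 1"
  then have "fst A \<noteq> {}" by auto
  then show "m_complete_within dce (index_set ar A) (index_set_fin ar)"
    unfolding m_complete_within_def
    using index_set_within_dce[OF assms] index_set_dce_hard[OF assms] by blast
qed

end
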